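(* Let $n\ge 2$ and $\rho \in \mathbf{C} \setminus \{-1, 0, 1\}$, and let $K_n(\rho)=\left[\rho^{|j-k|}\right]_{j,k=1}^n$. If $\lambda$ is a repeated eigenvalue of $K_n(\rho)$, then $\lambda = -n$ and $\lambda$ is a double eigenvalue. Moreover, $\lambda = -n$ is a double eigenvalue of type 1 iff $$\rho = \xi_n \frac{T_{(n+1)/2}(t_0)}{T_{(n-1)/2}(t_0)},$$ where $t_0 \in \mathbf{C}$ is any zero of the polynomial $$q_1(n, t) = \begin{cases} \frac{U_{n-1}(t) - n}{t-1}, & n = 4, 6, 8, \dots \\ \frac{U_{n-1}(t) - n}{t^2 - 1}, & n = 5, 7, 9, \dots; \end{cases}$$ while $\lambda = -n$ is a double eigenvalue of type 2 iff $$\rho = \frac{T_{(n+1)/2}(t_0)}{T_{(n-1)/2}(t_0)},$$ where $t_0 \in \mathbf{C}$ is any zero of the polynomial $$q_2(n, t) = \begin{cases} \frac{U_{n-1}(t) + n}{t+1}, & n = 4, 6, 8, \dots \\ U_{n-1}(t) + n, & n = 3, 5, 7, \dots \end{cases}$$ The multivaluedness of $\operatorname{Arccos} t$ does not affect the two formulas for $\rho$. When $n$ is odd, $T_{(n\pm 1)/2}(t)$ is the Chebyshev polynomial of the first kind.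
   Context: Here $\xi_n = \frac{n+1}{n-1}$; $U_k(t)$ is the Chebyshev polynomial of the second kind, $U_k(t)=\frac{\sin[(k+1)\theta]}{\sin\theta}$ with $t=\cos\theta\in\mathbf{C}$; and $T_{(n\pm 1)/2}(t) = \cos\left(\frac{n\pm 1}{2} \operatorname{Arccos} t\right)$ for $t \in \mathbf{C}$. Eigenvalues of $K_n(\rho)$ (for $\rho \in \mathbf{C} \setminus \{-\xi_n,-1,0,1,\xi_n\}$) are classified as follows: writing $z=e^{i\mu}$ with $z\neq\pm1$ ($\mu$ not an integer multiple of $\pi$), a type-1 eigenvalue is $\lambda=-\frac{\sin(n\mu)}{\sin\mu}$ where $\mu$ satisfies $\sin\frac{\mu(n+1)}{2}-\rho\sin\frac{\mu(n-1)}{2}=0$ (equivalently $z$ is a zero of $s_{n+1}(\rho,z)=z^{n+1}-\rho z^n+\rho z-1$; eigenvector with entries $\sin[\mu(j-\frac{n-1}{2})]$, $j=0,\dots,n-1$, which is skew-symmetric), and a type-2 eigenvalue is $\lambda=\frac{\sin(n\mu)}{\sin\mu}$ where $\mu$ satisfies $\cos\frac{\mu(n+1)}{2}-\rho\cos\frac{\mu(n-1)}{2}=0$ (equivalently $z$ is a zero of $c_{n+1}(\rho,z)=z^{n+1}-\rho z^n-\rho z+1$; eigenvector with entries $\cos[\mu(j-\frac{n-1}{2})]$, which is symmetric). The two types are mutually exclusive; there are $\lfloor n/2\rfloor$ type-1 and $\lceil n/2\rceil$ type-2 eigenvalues. For $\rho=\pm\xi_n$, $K_n(\rho)$ has no repeated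 eigenvalues. *)

theory Defs
  imports "HOL-Analysis.Analysis" "Jordan_Normal_Form.Char_Poly"
begin

definition KMS :: "nat \<Rightarrow> complex \<Rightarrow> complex mat" where
  "KMS n \<rho> = mat n n (\<lambda>(j,k). \<rho> ^ (if k \<le> j then j - k else k - j))"

definition alg_mult :: "nat \<Rightarrow> complex \<Rightarrow> complex \<Rightarrow> nat" where
  "alg_mult n \<rho> lam = order lam (char_poly (KMS n \<rho>))"

definition xi :: "nat \<Rightarrow> complex" where
  "xi n = (of_nat n + 1) / (of_nat n - 1)"

fun chebU :: "nat \<Rightarrow> complex poly" where
  "chebU 0 = 1"
| "chebU (Suc 0) = [:0, 2:]"
| "chebU (Suc (Suc k)) = [:0, 2:] * chebU (Suc k) - chebU k"

definition chebT_half :: "nat \<Rightarrow> complex \<Rightarrow> complex" where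
  "chebT_half m t = cos (of_nat m / 2 * Arccos t)"

definition q1 :: "nat \<Rightarrow> complex poly" where
  "q1 n = (if even n then (chebU (n - 1) - [:of_nat n:]) div [:-1, 1:]
           else (chebU (n - 1) - [:of_nat n:]) div [:-1, 0, 1:])"

definition q2 :: "nat \<Rightarrow> complex poly" where
  "q2 n = (if even n then (chebU (n - 1) + [:of_nat n:]) div [:1, 1:]
           else chebU (n - 1) + [:of_nat n:])"

text \<open>Type-1 / type-2 eigenvalues, as in the paper (z = e^{i mu} <> +-1 iff sin mu <> 0).\<close>
definition type1_eig :: "nat \<Rightarrow> complex \<Rightarrow> complex \<Rightarrow> bool" where
  "type1_eig n \<rho> lam \<longleftrightarrow> (\<exists>\<mu>::complex. sin \<mu> \<noteq> 0 \<and>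
      sin (\<mu> * (of_nat n + 1) / 2) - \<rho> * sin (\<mu> * (of_nat n - 1) / 2) = 0 \<and>
      lam = - sin (of_nat n * \<mu>) / sin \<mu>)"

definition type2_eig :: "nat \<Rightarrow> complex \<Rightarrow> complex \<Rightarrow> bool" where
  "type2_eig n \<rho> lam \<longleftrightarrow> (\<exists>\<mu>::complex. sin \<mu> \<noteq> 0 \<and>
      cos (\<mu> * (of_nat n + 1) / 2) - \<rho> * cos (\<mu> * (of_nat n - 1) / 2) = 0 \<and>
      lam = sin (of_nat n * \<mu>) / sin \<mu>)"

end

theory Submission
  imports Defs
begin

text \<open>
  Let \<open>f(z) = (1 - \<rho>\<^sup>2) z / Q(z)\<close>, \<open>Q(z) = (1 - \<rho> z) (z - \<rho>)\<close>, be the symbol of \<open>K\<^sub>n(\<rho>)\<close>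
  and \<open>P\<^sub>n\<close> its characteristic polynomial. The three-term recurrence satisfied by \<open>P\<^sub>n\<close> gives
  \<open>(1 - \<rho>\<^sup>2) (z\<^sup>2 - 1) Q(z)\<^sup>n P\<^sub>n(f(z)) = (\<rho> (1 - \<rho>\<^sup>2))\<^sup>n s\<^sub>n\<^sub>+\<^sub>1(z) c\<^sub>n\<^sub>+\<^sub>1(z)\<close>.
  A nonzero eigenvalue \<open>\<lambda>\<close> is taken by \<open>f\<close> exactly at two points \<open>z\<close> and \<open>1/z\<close>, so its
  multiplicity is the order of \<open>z\<close> as a root of \<open>s\<^sub>n\<^sub>+\<^sub>1 c\<^sub>n\<^sub>+\<^sub>1\<close>, corrected when \<open>z = \<plusminus>1\<close>.
  As \<open>s\<^sub>n\<^sub>+\<^sub>1\<close> and \<open>c\<^sub>n\<^sub>+\<^sub>1\<close> have no common root and their roots other than \<open>\<plusminus>1\<close> are at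
  most double, a repeated eigenvalue is double and comes from a double root \<open>z \<noteq> \<plusminus>1\<close> of one of
  them, where a direct computation gives \<open>f(z) = -n\<close>. For \<open>z = e\<^sup>i\<^sup>\<mu>\<close> with \<open>\<mu> = Arccos t\<close>
  the double-root condition reads \<open>sin (n\<mu>) / sin \<mu> = \<plusminus>n\<close>, i.e. \<open>U\<^sub>n\<^sub>-\<^sub>1(t) = \<plusminus>n\<close>, and
  the root condition becomes the stated formula for \<open>\<rho>\<close>.
\<close>

lemma order_power:
  fixes p :: "'a::idom poly"
  assumes "p \<noteq> 0"
  shows "order a (p ^ m) = m * order a p"
  using assms by (induction m) (simp_all add: order_mult)

lemma order_linear_factor: "order z [:-w, 1::'a::idom:] = (if w = z then 1 else 0)"
  using order_power_n_n[of z 1] by (auto intro: order_0I)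

lemma order_square_minus_one: "order z [:-1, 0, 1::complex:] = (if z^2 = 1 then 1 else 0)"
proof -
  have "[:-1, 0, 1::complex:] = [:-1, 1:] * [:-(-1), 1:]"
    by simp
  then have "order z [:-1, 0, 1::complex:] = order z [:-1, 1::complex:] + order z [:-(-1), 1::complex:]"
    by (metis order_mult pCons_eq_0_iff zero_neq_one)
  then show ?thesis
    unfolding order_linear_factor by (auto simp: power2_eq_1_iff)
qed

lemma order_le_if_poly_higher_pderiv_nonzero:
  fixes p :: "'a::{idom,semiring_char_0} poly"
  assumes "poly ((pderiv ^^ k) p) x \<noteq> 0"
  shows "order x p \<le> k"
  using assms
proof (induction k arbitrary: p)
  case 0
  then show ?case by (simp add: order_0I)
next
  case (Suc k)
  then have "order x (pderiv p) \<le> k" "p \<noteq> 0"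
    by (auto simp: funpow_Suc_right pderiv_0 simp del: funpow.simps)
  then show ?case
    using order_pderiv[of p x] by (cases "poly p x = 0") (auto simp: order_0I)
qed

lemma order_ge_2_iff:
  fixes p :: "'a::{idom,semiring_char_0} poly"
  assumes "pderiv p \<noteq> 0"
  shows "order x p \<ge> 2 \<longleftrightarrow> poly p x = 0 \<and> poly (pderiv p) x = 0"
proof (cases "poly p x = 0")
  case True
  have "p \<noteq> 0"
    using assms by auto
  then show ?thesis
    using True order_pderiv[of p x] order_root[of "pderiv p" x] assms by auto
qed (simp add: order_0I)

lemma poly_eqI_off_roots:
  fixes p q Q :: "'a::{idom,ring_char_0} poly"
  assumes "Q \<noteq> 0" and "\<And>z. poly Q z \<noteq> 0 \<Longrightarrow> poly p z = poly q z"
  shows "p = q"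
proof -
  have "poly ((p - q) * Q) z = 0" for z
    using assms(2)[of z] by (cases "poly Q z = 0") auto
  then have "(p - q) * Q = 0"
    by (simp add: poly_all_0_iff_0[symmetric] del: poly_mult)
  then show ?thesis
    using assms(1) by simp
qed

lemma poly_div_eq_0_iff:
  fixes p d :: "'a::field_char_0 poly"
  assumes "p \<noteq> 0" "d dvd p" and simple: "\<And>a. poly d a = 0 \<Longrightarrow> order a p \<le> 1"
  shows "poly (p div d) t = 0 \<longleftrightarrow> poly p t = 0 \<and> poly d t \<noteq> 0"
proof -
  have p: "p = d * (p div d)"
    using assms(2) by simp
  then have "d \<noteq> 0" "p div d \<noteq> 0"
    using assms(1) by auto
  show ?thesis
  proof (cases "poly d t = 0")
    case True
    then have "order t d \<ge> 1"
      using \<open>d \<noteq> 0\<close> order_root by (metis less_one not_le)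
    moreover have "order t p = order t d + order t (p div d)"
      using p assms(1) by (metis order_mult)
    ultimately have "order t (p div d) = 0"
      using simple[OF True] by simp
    then show ?thesis
      using True \<open>p div d \<noteq> 0\<close> order_root by blast
  next
    case False
    then show ?thesis
      by (subst (2) p) simp
  qed
qed

lemma dvd_square_minus_one:
  fixes p :: "complex poly"
  assumes "poly p 1 = 0" "poly p (-1) = 0"
  shows "[:-1, 0, 1:] dvd p"
proof -
  obtain r where r: "p = [:-1, 1:] * r"
    using assms(1) by (metis dvdE poly_eq_0_iff_dvd)
  then have "poly r (-1) = 0"
    using assms(2) by simp
  then obtain r' where "r = [:1, 1:] * r'"
    by (metis dvdE poly_eq_0_iff_dvd minus_minus)
  moreover have "[:-1, 1:] * [:1, 1:] = [:-1, 0, 1::complex:]"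
    by simp
  ultimately have "p = [:-1, 0, 1:] * r'"
    using r by (metis mult.assoc)
  then show ?thesis ..
qed

definition poly_homog :: "'a::comm_ring_1 poly \<Rightarrow> 'a poly \<Rightarrow> nat \<Rightarrow> 'a poly \<Rightarrow> 'a poly" where
  "poly_homog A Q d p = (\<Sum>k\<le>d. Polynomial.smult (coeff p k) (A ^ k * Q ^ (d - k)))"

lemma poly_poly_homog:
  fixes A Q p :: "'a::field poly"
  assumes "degree p \<le> d" "poly Q z \<noteq> 0"
  shows "poly (poly_homog A Q d p) z = poly Q z ^ d * poly p (poly A z / poly Q z)"
proof -
  let ?a = "poly A z" and ?q = "poly Q z"
  have "poly (poly_homog A Q d p) z = (\<Sum>k\<le>d. ?q ^ d * (coeff p k * (?a / ?q) ^ k))"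
  proof (unfold poly_homog_def poly_sum, rule sum.cong)
    fix k assume "k \<in> {..d}"
    then have "?q ^ d = ?q ^ k * ?q ^ (d - k)"
      by (simp flip: power_add)
    then show "poly (Polynomial.smult (coeff p k) (A ^ k * Q ^ (d - k))) z = ?q ^ d * (coeff p k * (?a / ?q) ^ k)"
      using assms(2) by (simp add: power_divide field_simps)
  qed simp
  also have "\<dots> = ?q ^ d * (\<Sum>k\<le>d. coeff p k * (?a / ?q) ^ k)"
    by (simp add: sum_distrib_left)
  also have "(\<Sum>k\<le>d. coeff p k * (?a / ?q) ^ k) = poly (\<Sum>k\<le>d. monom (coeff p k) k) (?a / ?q)"
    by (simp add: poly_sum poly_monom)
  finally show ?thesis
    by (simp only: poly_as_sum_of_monoms'[OF assms(1)])
qed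

lemma poly_homog_linear_power_mult:
  fixes A Q h :: "'a::field_char_0 poly"
  assumes "Q \<noteq> 0" "degree h \<le> d"
  shows "poly_homog A Q (d + m) ([:-a, 1:] ^ m * h) = (A - Polynomial.smult a Q) ^ m * poly_homog A Q d h"
proof (rule poly_eqI_off_roots[OF assms(1)])
  fix z assume q: "poly Q z \<noteq> 0"
  let ?a = "poly A z" and ?q = "poly Q z"
  have "degree ([:-a, 1:] ^ m * h) \<le> d + m"
    using assms(2) degree_mult_le[of "[:-a, 1:] ^ m" h] degree_power_le[of "[:-a, 1:]" m] by simp
  then have "poly (poly_homog A Q (d + m) ([:-a, 1:] ^ m * h)) z
      = (?q * (?a / ?q - a)) ^ m * (?q ^ d * poly h (?a / ?q))"
    by (simp add: poly_poly_homog[OF _ q] power_add power_mult_distrib)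
  also have "?q * (?a / ?q - a) = ?a - a * ?q"
    using q by (simp add: field_simps)
  finally show "poly (poly_homog A Q (d + m) ([:-a, 1:] ^ m * h)) z
      = poly ((A - Polynomial.smult a Q) ^ m * poly_homog A Q d h) z"
    by (simp add: poly_poly_homog[OF assms(2) q])
qed

lemma order_poly_homog:
  fixes A Q p :: "'a::field_char_0 poly"
  assumes p: "p \<noteq> 0" "degree p = d" and Q: "Q \<noteq> 0" and pencil: "A - Polynomial.smult l Q \<noteq> 0"
    and z: "poly Q z \<noteq> 0" "poly A z = l * poly Q z"
  shows "order z (poly_homog A Q d p) = order l p * order z (A - Polynomial.smult l Q)"
proof -
  define m where "m = order l p"
  obtain h where h: "p = [:-l, 1:] ^ m * h" and "\<not> [:-l, 1:] dvd h"
    using order_decomp[OF p(1)] unfolding m_def by blast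
  then have "h \<noteq> 0" "poly h l \<noteq> 0"
    by (auto simp: poly_eq_0_iff_dvd)
  have "degree h + m = d"
    using p \<open>h \<noteq> 0\<close> unfolding h by (simp add: degree_mult_eq degree_linear_power)
  moreover have "poly_homog A Q (degree h + m) ([:-l, 1:] ^ m * h)
      = (A - Polynomial.smult l Q) ^ m * poly_homog A Q (degree h) h"
    by (rule poly_homog_linear_power_mult[OF Q order_refl])
  ultimately have homog: "poly_homog A Q d p = (A - Polynomial.smult l Q) ^ m * poly_homog A Q (degree h) h"
    using h by simp
  have "poly (poly_homog A Q (degree h) h) z \<noteq> 0"
    using z \<open>poly h l \<noteq> 0\<close> by (simp add: poly_poly_homog)
  then have "order z (poly_homog A Q (degree h) h) = 0" "poly_homog A Q (degree h) h \<noteq> 0"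
    by (auto simp: order_0I)
  then show ?thesis
    unfolding homog m_def using pencil
    by (simp add: order_mult order_power)
qed

section \<open>The characteristic polynomial of \<open>K\<^sub>n(\<rho>)\<close>\<close>

lemma det_expand_last_row_col:
  fixes B :: "'a::comm_ring_1 mat"
  assumes B: "B \<in> carrier_mat (Suc (Suc m)) (Suc (Suc m))"
    and row: "\<And>j. j < m \<Longrightarrow> B $$ (Suc m, j) = 0"
    and col: "\<And>i. i < m \<Longrightarrow> B $$ (i, Suc m) = 0"
  shows "det B = B $$ (Suc m, Suc m) * det (mat_delete B (Suc m) (Suc m))
     - B $$ (m, Suc m) * B $$ (Suc m, m) * det (mat_delete (mat_delete B (Suc m) (Suc m)) m m)"
proof -
  define C where "C = mat_delete B (Suc m) m"
  have C: "C \<in> carrier_mat (Suc m) (Suc m)"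
    unfolding C_def using mat_delete_carrier[OF B] by simp
  have "det B = (\<Sum>j<Suc (Suc m). B $$ (Suc m, j) * cofactor B (Suc m) j)"
    by (rule laplace_expansion_row[OF B], simp)
  also have "\<dots> = B $$ (Suc m, m) * cofactor B (Suc m) m + B $$ (Suc m, Suc m) * cofactor B (Suc m) (Suc m)"
    using row by simp
  finally have det_B: "det B = \<dots>" .
  have "mat_delete C m m = mat_delete (mat_delete B (Suc m) (Suc m)) m m"
    by (rule eq_matI) (use B in \<open>auto simp: C_def mat_delete_def\<close>)
  then have "cofactor C m m = det (mat_delete (mat_delete B (Suc m) (Suc m)) m m)"
    by (simp add: cofactor_def flip: mult_2)
  moreover have "det C = (\<Sum>i<Suc m. C $$ (i, m) * cofactor C i m)"
    by (rule laplace_expansion_column[OF C], simp)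
  moreover have "C $$ (i, m) = 0" if "i < m" for i
    using col that B by (simp add: C_def mat_delete_def)
  moreover have "C $$ (m, m) = B $$ (m, Suc m)"
    using B by (simp add: C_def mat_delete_def)
  ultimately have "det C = B $$ (m, Suc m) * det (mat_delete (mat_delete B (Suc m) (Suc m)) m m)"
    by simp
  then show ?thesis
    unfolding det_B cofactor_def C_def[symmetric] by simp
qed

definition KMS_char_mat :: "complex \<Rightarrow> nat \<Rightarrow> complex \<Rightarrow> complex mat" where
  "KMS_char_mat \<rho> k x = mat k k (\<lambda>(i, j). (if i = j then x else 0) - \<rho> ^ (if j \<le> i then i - j else j - i))"

lemma KMS_char_mat_dim [simp]:
  "dim_row (KMS_char_mat \<rho> k x) = k" "dim_col (KMS_char_mat \<rho> k x) = k"
  by (simp_all add: KMS_char_mat_def)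

lemma KMS_char_mat_carrier [simp]: "KMS_char_mat \<rho> k x \<in> carrier_mat k k"
  by (simp add: carrier_matI)

lemma poly_char_poly_KMS: "poly (char_poly (KMS k \<rho>)) x = det (KMS_char_mat \<rho> k x)"
proof -
  have "poly (char_poly (KMS k \<rho>)) x = det (- char_matrix (KMS k \<rho>) x)"
    by (rule char_poly_matrix[of _ k]) (simp add: KMS_def)
  also have "- char_matrix (KMS k \<rho>) x = KMS_char_mat \<rho> k x"
    by (rule eq_matI) (auto simp: KMS_char_mat_def KMS_def char_matrix_def)
  finally show ?thesis .
qed

lemma mat_delete_KMS_char_mat: "mat_delete (KMS_char_mat \<rho> (Suc k) x) k k = KMS_char_mat \<rho> k x"
  by (rule eq_matI) (auto simp: KMS_char_mat_def mat_delete_def)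

lemma KMS_char_mat_elimination:
  fixes \<rho> x :: complex and m :: nat
  defines "B \<equiv> addrow (-\<rho>) (Suc m) m (addcol (-\<rho>) (Suc m) m (KMS_char_mat \<rho> (Suc (Suc m)) x))"
  shows "B \<in> carrier_mat (Suc (Suc m)) (Suc (Suc m))" "det B = det (KMS_char_mat \<rho> (Suc (Suc m)) x)"
    and "\<And>j. j < m \<Longrightarrow> B $$ (Suc m, j) = 0" "\<And>i. i < m \<Longrightarrow> B $$ (i, Suc m) = 0"
    and "mat_delete B (Suc m) (Suc m) = KMS_char_mat \<rho> (Suc m) x"
    and "B $$ (Suc m, Suc m) = x * (1 + \<rho>^2) - (1 - \<rho>^2)"
    and "B $$ (m, Suc m) = - \<rho> * x" "B $$ (Suc m, m) = - \<rho> * x"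
proof -
  let ?M = "KMS_char_mat \<rho> (Suc (Suc m)) x"
  define A where "A = addcol (-\<rho>) (Suc m) m ?M"
  have A_carrier: "A \<in> carrier_mat (Suc (Suc m)) (Suc (Suc m))"
    by (simp add: A_def mat_addcol_def)
  then show B_carrier: "B \<in> carrier_mat (Suc (Suc m)) (Suc (Suc m))"
    by (simp add: B_def A_def[symmetric])
  have "det B = det A"
    unfolding B_def A_def[symmetric] by (rule det_addrow[OF _ _ A_carrier]) auto
  also have "det A = det ?M"
    unfolding A_def by (rule det_addcol[of m "Suc (Suc m)"]) auto
  finally show "det B = det ?M" .
  have M: "?M $$ (i, j) = (if i = j then x else 0) - \<rho> ^ (if j \<le> i then i - j else j - i)"
    if "i < Suc (Suc m)" "j < Suc (Suc m)" for i j
    using that by (simp add: KMS_char_mat_def)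
  have A: "A $$ (i, j) = (if j = Suc m then -\<rho> * ?M $$ (i, m) + ?M $$ (i, j) else ?M $$ (i, j))"
    if "i < Suc (Suc m)" "j < Suc (Suc m)" for i j
    using that by (auto simp: A_def mat_addcol_def)
  have B: "B $$ (i, j) = (if i = Suc m then -\<rho> * A $$ (m, j) + A $$ (i, j) else A $$ (i, j))"
    if "i < Suc (Suc m)" "j < Suc (Suc m)" for i j
    using that A_carrier by (auto simp: B_def A_def[symmetric])
  show "B $$ (Suc m, j) = 0" if "j < m" for j
    using that by (simp add: B A M Suc_diff_le)
  show "B $$ (i, Suc m) = 0" if "i < m" for i
    using that by (simp add: B A M Suc_diff_le)
  show "mat_delete B (Suc m) (Suc m) = KMS_char_mat \<rho> (Suc m) x"
    by (rule eq_matI) (use B_carrier in \<open>auto simp: mat_delete_def B A M, auto simp: KMS_char_mat_def\<close>)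
  show "B $$ (Suc m, Suc m) = x * (1 + \<rho>^2) - (1 - \<rho>^2)"
    by (simp add: B A M algebra_simps power2_eq_square)
  show "B $$ (m, Suc m) = - \<rho> * x" "B $$ (Suc m, m) = - \<rho> * x"
    by (simp_all add: B A M algebra_simps)
qed

lemma det_KMS_char_mat_rec:
  "det (KMS_char_mat \<rho> (Suc (Suc m)) x) =
     (x * (1 + \<rho>^2) - (1 - \<rho>^2)) * det (KMS_char_mat \<rho> (Suc m) x)
     - \<rho>^2 * x^2 * det (KMS_char_mat \<rho> m x)"
  using det_expand_last_row_col[OF KMS_char_mat_elimination(1,3,4)]
  unfolding KMS_char_mat_elimination(2,5-8) mat_delete_KMS_char_mat
  by (simp add: power2_eq_square algebra_simps)

lemma poly_char_poly_KMS_rec: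
  "poly (char_poly (KMS (Suc (Suc m)) \<rho>)) x =
     (x * (1 + \<rho>^2) - (1 - \<rho>^2)) * poly (char_poly (KMS (Suc m) \<rho>)) x
     - \<rho>^2 * x^2 * poly (char_poly (KMS m \<rho>)) x"
  unfolding poly_char_poly_KMS by (rule det_KMS_char_mat_rec)

lemma poly_char_poly_KMS_0: "poly (char_poly (KMS 0 \<rho>)) x = 1"
  unfolding poly_char_poly_KMS by (rule det_dim_zero) (simp add: KMS_char_mat_def)

lemma poly_char_poly_KMS_1: "poly (char_poly (KMS (Suc 0) \<rho>)) x = x - 1"
  unfolding poly_char_poly_KMS by (subst det_single) (simp_all add: KMS_char_mat_def)

lemma poly_char_poly_KMS_at_0: "poly (char_poly (KMS (Suc m) \<rho>)) 0 = - ((\<rho>^2 - 1) ^ m)"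
proof (induction m rule: nat_less_induct)
  case (1 m)
  show ?case
  proof (cases m)
    case (Suc j)
    then show ?thesis
      using 1 poly_char_poly_KMS_rec[of j \<rho> 0] by simp
  qed (simp add: poly_char_poly_KMS_1)
qed

lemma KMS_carrier: "KMS n \<rho> \<in> carrier_mat n n"
  by (simp add: KMS_def)

lemma degree_char_poly_KMS: "degree (char_poly (KMS n \<rho>)) = n"
  using degree_monic_char_poly[OF KMS_carrier] by simp

lemma char_poly_KMS_nonzero: "char_poly (KMS n \<rho>) \<noteq> 0"
  using degree_monic_char_poly[OF KMS_carrier, of n \<rho>] by auto

section \<open>The symbol of \<open>K\<^sub>n(\<rho>)\<close>\<close>

text \<open>The symbol \<open>\<Sum>\<^sub>k \<rho>\<^bsup>|k|\<^esup> z\<^sup>k\<close> of \<open>K\<^sub>n(\<rho>)\<close> is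
  \<open>(1 - \<rho>\<^sup>2) z / ((1 - \<rho> z) (z - \<rho>))\<close>; these are its numerator and denominator.\<close>
definition KMS_symbol_num :: "complex \<Rightarrow> complex poly" where
  "KMS_symbol_num \<rho> = [:0, 1 - \<rho>^2:]"

definition KMS_symbol_den :: "complex \<Rightarrow> complex poly" where
  "KMS_symbol_den \<rho> = [:-\<rho>, 1 + \<rho>^2, -\<rho>:]"

lemma poly_KMS_symbol_num [simp]: "poly (KMS_symbol_num \<rho>) z = (1 - \<rho>^2) * z"
  by (simp add: KMS_symbol_num_def)

lemma poly_KMS_symbol_den [simp]: "poly (KMS_symbol_den \<rho>) z = (1 - \<rho> * z) * (z - \<rho>)"
  by (simp add: KMS_symbol_den_def algebra_simps power2_eq_square)

text \<open>\<open>sc_poly 1 \<rho> n\<close> is the paper's \<open>s\<^sub>n\<^sub>+\<^sub>1(\<rho>, \<cdot>)\<close> and \<open>sc_poly (-1) \<rho> n\<close> is \<open>c\<^sub>n\<^sub>+\<^sub>1(\<rho>, \<cdot>)\<close>.\<close>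
definition sc_poly :: "complex \<Rightarrow> complex \<Rightarrow> nat \<Rightarrow> complex poly" where
  "sc_poly \<epsilon> \<rho> n = monom 1 (n + 1) - Polynomial.smult \<rho> (monom 1 n) + Polynomial.smult \<epsilon> [:-1, \<rho>:]"

lemma poly_sc_poly: "poly (sc_poly \<epsilon> \<rho> n) z = z^(n+1) - \<rho> * z^n + \<epsilon> * (\<rho> * z - 1)"
  by (simp add: sc_poly_def poly_monom algebra_simps)

lemma sc_poly_nonzero:
  assumes "n \<noteq> 0"
  shows "sc_poly \<epsilon> \<rho> n \<noteq> 0"
proof -
  have "coeff (sc_poly \<epsilon> \<rho> n) (Suc n) = 1"
    using assms by (cases n) (auto simp: sc_poly_def coeff_monom)
  then show ?thesis by auto
qed

lemma poly_sc_poly_mult: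
  "poly (sc_poly 1 \<rho> n) z * poly (sc_poly (-1) \<rho> n) z = (z - \<rho>)^2 * z^(2*n) - (1 - \<rho> * z)^2"
proof -
  have "(X * z - \<rho> * X + (\<rho> * z - 1)) * (X * z - \<rho> * X + (1 - \<rho> * z))
      = (z - \<rho>)^2 * X^2 - (1 - \<rho> * z)^2" for X
    by (simp add: power2_eq_square algebra_simps)
  moreover have "poly (sc_poly \<epsilon> \<rho> n) z = z^n * z - \<rho> * z^n + \<epsilon> * (\<rho> * z - 1)" for \<epsilon>
    by (simp add: poly_sc_poly mult.commute)
  ultimately show ?thesis
    by (simp add: power_even_eq)
qed

lemma poly_sc_poly_mult_rec:
  fixes \<rho> z :: complex
  defines "R k \<equiv> (\<rho> * (1 - \<rho>^2))^k * (poly (sc_poly 1 \<rho> k) z * poly (sc_poly (-1) \<rho> k) z)"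
  shows "R (Suc (Suc k)) = (1 - \<rho>^2) * \<rho> * (1 + z^2) * R (Suc k) - \<rho>^2 * ((1 - \<rho>^2) * z)^2 * R k"
proof -
  have "2 * Suc (Suc k) = 2 * k + 4" "2 * Suc k = 2 * k + 2"
    by simp_all
  then have z_pow: "z^(2 * Suc (Suc k)) = z^(2*k) * z^4" "z^(2 * Suc k) = z^(2*k) * z^2"
    by (simp_all only: power_add)
  have "\<rho> * (1 - \<rho>^2) * (\<rho> * (1 - \<rho>^2) * P) * ((z - \<rho>)^2 * (Y * z^4) - (1 - \<rho> * z)^2)
      = (1 - \<rho>^2) * \<rho> * (1 + z^2) * (\<rho> * (1 - \<rho>^2) * P * ((z - \<rho>)^2 * (Y * z^2) - (1 - \<rho> * z)^2))
        - \<rho>^2 * ((1 - \<rho>^2) * z)^2 * (P * ((z - \<rho>)^2 * Y - (1 - \<rho> * z)^2))" for P Y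
    by (simp add: power2_eq_square power4_eq_xxxx algebra_simps)
  then show ?thesis
    unfolding R_def poly_sc_poly_mult z_pow power_Suc .
qed

text \<open>Both sides satisfy the three-term recurrence of \<open>poly_char_poly_KMS_rec\<close> in \<open>n\<close>.\<close>
lemma poly_char_poly_KMS_symbol:
  assumes "(1 - \<rho> * z) * (z - \<rho>) \<noteq> 0"
  shows "(1 - \<rho>^2) * ((1 - \<rho> * z) * (z - \<rho>))^n
           * poly (char_poly (KMS n \<rho>)) ((1 - \<rho>^2) * z / ((1 - \<rho> * z) * (z - \<rho>))) * (z^2 - 1)
         = (\<rho> * (1 - \<rho>^2))^n * (poly (sc_poly 1 \<rho> n) z * poly (sc_poly (-1) \<rho> n) z)"
proof -
  define Q where "Q = (1 - \<rho> * z) * (z - \<rho>)"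
  define A where "A = (1 - \<rho>^2) * z"
  define x where "x = A / Q"
  have xQ: "x * Q = A"
    using assms unfolding x_def Q_def by simp
  define F where "F k = (1 - \<rho>^2) * Q^k * poly (char_poly (KMS k \<rho>)) x * (z^2 - 1)" for k
  define R where "R k = (\<rho> * (1 - \<rho>^2))^k * (poly (sc_poly 1 \<rho> k) z * poly (sc_poly (-1) \<rho> k) z)" for k
  have F_rec: "F (Suc (Suc k)) = (1 - \<rho>^2) * \<rho> * (1 + z^2) * F (Suc k) - \<rho>^2 * A^2 * F k" for k
  proof -
    have "F (Suc (Suc k)) = (1 - \<rho>^2) * Q^(Suc (Suc k))
        * ((x * (1 + \<rho>^2) - (1 - \<rho>^2)) * poly (char_poly (KMS (Suc k) \<rho>)) x
           - \<rho>^2 * x^2 * poly (char_poly (KMS k \<rho>)) x) * (z^2 - 1)"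
      unfolding F_def poly_char_poly_KMS_rec ..
    also have "\<dots> = (x * Q * (1 + \<rho>^2) - (1 - \<rho>^2) * Q) * F (Suc k) - \<rho>^2 * (x * Q)^2 * F k"
      unfolding F_def by (simp add: power2_eq_square algebra_simps)
    also have "x * Q * (1 + \<rho>^2) - (1 - \<rho>^2) * Q = (1 - \<rho>^2) * \<rho> * (1 + z^2)"
      unfolding xQ unfolding A_def Q_def by (simp add: power2_eq_square algebra_simps)
    finally show ?thesis
      unfolding xQ .
  qed
  have "F 0 = R 0"
    unfolding F_def R_def poly_sc_poly_mult by (simp add: poly_char_poly_KMS_0 power2_eq_square algebra_simps)
  moreover have "F 1 = R 1"
  proof -
    have "F 1 = (1 - \<rho>^2) * (x * Q - Q) * (z^2 - 1)"
      unfolding F_def by (simp add: poly_char_poly_KMS_1 algebra_simps)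
    then show ?thesis
      unfolding xQ unfolding R_def poly_sc_poly_mult A_def Q_def by (simp add: power2_eq_square algebra_simps)
  qed
  ultimately have "F k = R k \<and> F (Suc k) = R (Suc k)" for k
    by (induction k) (simp_all add: F_rec poly_sc_poly_mult_rec[where \<rho> = \<rho> and z = z, folded R_def A_def])
  then show ?thesis
    unfolding F_def R_def x_def A_def Q_def by simp
qed

definition char_poly_KMS_symbol :: "complex \<Rightarrow> nat \<Rightarrow> complex poly" where
  "char_poly_KMS_symbol \<rho> n =
     poly_homog (KMS_symbol_num \<rho>) (KMS_symbol_den \<rho>) n (char_poly (KMS n \<rho>))"

lemma char_poly_KMS_symbol_eq:
  assumes "\<rho> \<noteq> 0"
  shows "Polynomial.smult (1 - \<rho>^2) (char_poly_KMS_symbol \<rho> n * [:-1, 0, 1:])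
       = Polynomial.smult ((\<rho> * (1 - \<rho>^2))^n) (sc_poly 1 \<rho> n * sc_poly (-1) \<rho> n)"
proof (rule poly_eqI_off_roots)
  show "KMS_symbol_den \<rho> \<noteq> 0"
    using assms by (simp add: KMS_symbol_den_def)
next
  fix z assume den: "poly (KMS_symbol_den \<rho>) z \<noteq> 0"
  have "poly (Polynomial.smult (1 - \<rho>^2) (char_poly_KMS_symbol \<rho> n * [:-1, 0, 1:])) z
      = (1 - \<rho>^2) * ((1 - \<rho> * z) * (z - \<rho>))^n
        * poly (char_poly (KMS n \<rho>)) ((1 - \<rho>^2) * z / ((1 - \<rho> * z) * (z - \<rho>))) * (z^2 - 1)"
    using den by (simp add: char_poly_KMS_symbol_def poly_poly_homog degree_char_poly_KMS
        power2_eq_square algebra_simps)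
  also have "\<dots> = (\<rho> * (1 - \<rho>^2))^n * (poly (sc_poly 1 \<rho> n) z * poly (sc_poly (-1) \<rho> n) z)"
    using den by (simp add: poly_char_poly_KMS_symbol)
  finally show "poly (Polynomial.smult (1 - \<rho>^2) (char_poly_KMS_symbol \<rho> n * [:-1, 0, 1:])) z
      = poly (Polynomial.smult ((\<rho> * (1 - \<rho>^2))^n) (sc_poly 1 \<rho> n * sc_poly (-1) \<rho> n)) z"
    by simp
qed

lemma order_char_poly_KMS_symbol:
  assumes "\<rho> \<noteq> 0" "\<rho>^2 \<noteq> 1" "n \<noteq> 0"
  shows "order z (char_poly_KMS_symbol \<rho> n) + (if z^2 = 1 then 1 else 0)
       = order z (sc_poly 1 \<rho> n) + order z (sc_poly (-1) \<rho> n)"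
proof -
  let ?G = "char_poly_KMS_symbol \<rho> n * [:-1, 0, 1:]" and ?SC = "sc_poly 1 \<rho> n * sc_poly (-1) \<rho> n"
  have nonzero: "1 - \<rho>^2 \<noteq> 0" "(\<rho> * (1 - \<rho>^2))^n \<noteq> 0" "?SC \<noteq> 0"
    using assms sc_poly_nonzero[OF assms(3)] by auto
  note eq = char_poly_KMS_symbol_eq[OF assms(1), of n]
  have "?G \<noteq> 0"
  proof
    assume "?G = 0"
    then show False
      using eq nonzero by (metis smult_eq_0_iff mult_zero_right)
  qed
  have "order z (char_poly_KMS_symbol \<rho> n) + order z [:-1, 0, 1:] = order z ?G"
    by (rule order_mult[symmetric]) fact
  also have "\<dots> = order z (Polynomial.smult (1 - \<rho>^2) ?G)"
    by (rule order_smult[symmetric]) fact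
  also have "\<dots> = order z ?SC"
    unfolding eq by (rule order_smult) fact
  also have "\<dots> = order z (sc_poly 1 \<rho> n) + order z (sc_poly (-1) \<rho> n)"
    by (rule order_mult) fact
  finally show ?thesis
    by (simp only: order_square_minus_one)
qed

text \<open>The level equation of the symbol is a palindromic quadratic in \<open>z\<close>.\<close>
lemma KMS_symbol_level_factor:
  assumes "\<rho> \<noteq> 0" "l \<noteq> 0" "poly (KMS_symbol_num \<rho>) z = l * poly (KMS_symbol_den \<rho>) z"
  shows "z \<noteq> 0"
    and "KMS_symbol_num \<rho> - Polynomial.smult l (KMS_symbol_den \<rho>)
       = Polynomial.smult (l * \<rho>) ([:-z, 1:] * [:-1/z, 1:])"
proof -
  show "z \<noteq> 0"
    using assms by auto
  define b where "b = (1 - \<rho>^2) - l * (1 + \<rho>^2)"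
  have root: "l * \<rho> * z^2 + b * z + l * \<rho> = 0"
    using assms(3) by (simp add: b_def algebra_simps power2_eq_square)
  have "b * z = (l * \<rho> * z^2 + b * z + l * \<rho>) - l * \<rho> * (z^2 + 1)"
    by (simp add: algebra_simps)
  also have "\<dots> = - l * \<rho> * (z^2 + 1)"
    using root by simp
  finally have "b = - l * \<rho> * (z + 1/z)"
    using \<open>z \<noteq> 0\<close> by (simp add: field_simps power2_eq_square)
  moreover have "KMS_symbol_num \<rho> - Polynomial.smult l (KMS_symbol_den \<rho>) = [:l * \<rho>, b, l * \<rho>:]"
    by (simp add: KMS_symbol_num_def KMS_symbol_den_def b_def algebra_simps)
  ultimately show "KMS_symbol_num \<rho> - Polynomial.smult l (KMS_symbol_den \<rho>)
      = Polynomial.smult (l * \<rho>) ([:-z, 1:] * [:-1/z, 1:])"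
    using \<open>z \<noteq> 0\<close> by (simp add: algebra_simps)
qed

lemma KMS_symbol_level_nonempty:
  assumes "\<rho> \<noteq> 0" "l \<noteq> 0"
  obtains z where "poly (KMS_symbol_num \<rho>) z = l * poly (KMS_symbol_den \<rho>) z"
proof -
  let ?pencil = "KMS_symbol_num \<rho> - Polynomial.smult l (KMS_symbol_den \<rho>)"
  have "coeff ?pencil 2 = l * \<rho>"
    by (simp add: KMS_symbol_num_def KMS_symbol_den_def numeral_2_eq_2)
  then have "degree ?pencil \<ge> 2"
    using assms by (intro le_degree) simp
  then have "\<not> constant (poly ?pencil)"
    by (simp add: constant_degree)
  then obtain z where "poly ?pencil z = 0"
    using fundamental_theorem_of_algebra by blast
  then show ?thesis
    by (intro that) simp
qed

lemma order_char_poly_KMS_eq_order_sc_poly: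
  assumes \<rho>: "\<rho> \<noteq> 0" "\<rho>^2 \<noteq> 1" and "n \<noteq> 0" "l \<noteq> 0"
    and level: "poly (KMS_symbol_num \<rho>) z = l * poly (KMS_symbol_den \<rho>) z"
  shows "order l (char_poly (KMS n \<rho>)) * (if z^2 = 1 then 2 else 1) + (if z^2 = 1 then 1 else 0)
       = order z (sc_poly 1 \<rho> n) + order z (sc_poly (-1) \<rho> n)"
proof -
  note factor = KMS_symbol_level_factor[OF \<rho>(1) \<open>l \<noteq> 0\<close> level]
  let ?pencil = "KMS_symbol_num \<rho> - Polynomial.smult l (KMS_symbol_den \<rho>)"
  have den: "KMS_symbol_den \<rho> \<noteq> 0" "poly (KMS_symbol_den \<rho>) z \<noteq> 0"
    using level factor(1) \<rho> by (auto simp: KMS_symbol_den_def)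
  have pencil: "?pencil \<noteq> 0"
    unfolding factor(2) using factor(1) \<rho>(1) \<open>l \<noteq> 0\<close> by simp
  have "order z (Polynomial.smult (l * \<rho>) ([:-z, 1:] * [:-1/z, 1:])) = order z ([:-z, 1:] * [:-1/z, 1:])"
    by (rule order_smult) (simp add: \<rho>(1) \<open>l \<noteq> 0\<close>)
  also have "\<dots> = order z [:-z, 1:] + order z [:-1/z, 1:]"
    by (rule order_mult) (metis mult_eq_0_iff pCons_eq_0_iff one_neq_zero)
  also have "\<dots> = (if z^2 = 1 then 2 else 1)"
  proof -
    have "1/z = z \<longleftrightarrow> z^2 = 1"
      using factor(1) by (auto simp: field_simps power2_eq_square)
    then show ?thesis
      by (simp add: order_linear_factor)
  qed
  finally have "order z ?pencil = (if z^2 = 1 then 2 else 1)"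
    unfolding factor(2) .
  moreover have "order z (char_poly_KMS_symbol \<rho> n) = order l (char_poly (KMS n \<rho>)) * order z ?pencil"
    unfolding char_poly_KMS_symbol_def
    by (rule order_poly_homog[OF char_poly_KMS_nonzero degree_char_poly_KMS den(1) pencil den(2) level])
  ultimately have "order z (char_poly_KMS_symbol \<rho> n)
      = order l (char_poly (KMS n \<rho>)) * (if z^2 = 1 then 2 else 1)"
    by simp
  then show ?thesis
    using order_char_poly_KMS_symbol[OF \<rho> \<open>n \<noteq> 0\<close>, of z] by simp
qed

section \<open>Multiple roots of \<open>s\<^sub>n\<^sub>+\<^sub>1\<close> and \<open>c\<^sub>n\<^sub>+\<^sub>1\<close>\<close>

lemma poly_sc_poly_0: "n \<noteq> 0 \<Longrightarrow> poly (sc_poly \<epsilon> \<rho> n) 0 = - \<epsilon>"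
  by (simp add: poly_sc_poly)

lemma sc_poly_root_iff:
  "poly (sc_poly \<epsilon> \<rho> n) z = 0 \<longleftrightarrow> \<rho> * (z^n - \<epsilon> * z) = z^n * z - \<epsilon>"
proof -
  have "\<rho> * (z^n - \<epsilon> * z) - (z^n * z - \<epsilon>) = - poly (sc_poly \<epsilon> \<rho> n) z"
    by (simp add: poly_sc_poly algebra_simps)
  then show ?thesis
    by (metis eq_iff_diff_eq_0 neg_equal_0_iff_equal)
qed

lemma pderiv_sc_poly:
  "pderiv (sc_poly \<epsilon> \<rho> n)
     = monom (of_nat (n + 1)) n - Polynomial.smult \<rho> (monom (of_nat n) (n - 1)) + [:\<epsilon> * \<rho>:]"
  by (simp add: sc_poly_def pderiv_add pderiv_diff pderiv_smult pderiv_monom pderiv_pCons smult_monom)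

lemma pderiv_sc_poly_nonzero:
  assumes "n \<noteq> 0"
  shows "pderiv (sc_poly \<epsilon> \<rho> n) \<noteq> 0"
proof -
  have "coeff (pderiv (sc_poly \<epsilon> \<rho> n)) n = of_nat n + 1"
    using assms by (cases n) (simp_all add: pderiv_sc_poly coeff_monom)
  then show ?thesis
    by (metis coeff_0 of_nat_Suc of_nat_neq_0 add.commute)
qed

lemma poly_pderiv_sc_poly:
  assumes "n \<noteq> 0"
  shows "z * poly (pderiv (sc_poly \<epsilon> \<rho> n)) z = of_nat (n + 1) * z^n * z - of_nat n * \<rho> * z^n + \<epsilon> * \<rho> * z"
  using assms by (cases n) (simp_all add: pderiv_sc_poly poly_monom algebra_simps)

lemma poly_pderiv2_sc_poly:
  assumes "n \<ge> 2"
  shows "z^2 * poly ((pderiv ^^ 2) (sc_poly \<epsilon> \<rho> n)) z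
       = of_nat n * z^n * (of_nat (n + 1) * z - (of_nat n - 1) * \<rho>)"
proof -
  obtain k where "n = Suc (Suc k)"
    using assms by (metis add_2_eq_Suc le_Suc_ex)
  then show ?thesis
    by (simp add: pderiv_sc_poly pderiv_add pderiv_diff pderiv_smult pderiv_monom poly_monom
        power2_eq_square algebra_simps numeral_2_eq_2)
qed

lemma poly_pderiv3_sc_poly:
  assumes "n \<ge> 2"
  shows "z^3 * poly ((pderiv ^^ 3) (sc_poly \<epsilon> \<rho> n)) z
       = of_nat n * (of_nat n - 1) * z^n * (of_nat (n + 1) * z - (of_nat n - 2) * \<rho>)"
proof -
  obtain k where "n = Suc (Suc k)"
    using assms by (metis add_2_eq_Suc le_Suc_ex)
  then show ?thesis
    by (cases k) (simp_all add: pderiv_sc_poly pderiv_add pderiv_diff pderiv_smult pderiv_monom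
        poly_monom power3_eq_cube algebra_simps numeral_3_eq_3)
qed

lemma order_sc_poly_le_3:
  assumes "\<rho> \<noteq> 0" "\<epsilon> \<noteq> 0" "n \<ge> 2"
  shows "order z (sc_poly \<epsilon> \<rho> n) \<le> 3"
proof (cases "z = 0")
  case True
  then show ?thesis
    using assms by (simp add: poly_sc_poly_0 order_0I)
next
  case False
  have n: "of_nat n \<noteq> (0::complex)" "of_nat n - 1 \<noteq> (0::complex)"
    using assms(3) by auto
  have "poly ((pderiv ^^ 2) (sc_poly \<epsilon> \<rho> n)) z \<noteq> 0 \<or> poly ((pderiv ^^ 3) (sc_poly \<epsilon> \<rho> n)) z \<noteq> 0"
  proof (rule ccontr)
    assume "\<not> ?thesis"
    then have "of_nat (n + 1) * z = (of_nat n - 1) * \<rho>" "of_nat (n + 1) * z = (of_nat n - 2) * \<rho>"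
      using poly_pderiv2_sc_poly[OF assms(3), of z \<epsilon> \<rho>] poly_pderiv3_sc_poly[OF assms(3), of z \<epsilon> \<rho>]
        False n by auto
    moreover have "(of_nat n - 1) * \<rho> - (of_nat n - 2) * \<rho> = \<rho>"
      by (simp add: algebra_simps)
    ultimately show False
      using assms(1) by simp
  qed
  then show ?thesis
    using order_le_if_poly_higher_pderiv_nonzero[of 2 _ z] order_le_if_poly_higher_pderiv_nonzero[of 3 _ z]
    by fastforce
qed

lemma sc_poly_pderiv_roots_power_eq:
  assumes "n \<ge> 2" "z \<noteq> 0"
    and d1: "poly (pderiv (sc_poly \<epsilon> \<rho> n)) z = 0" and d2: "poly ((pderiv ^^ 2) (sc_poly \<epsilon> \<rho> n)) z = 0"
  shows "z^n = \<epsilon> * z"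
proof -
  define X where "X = z^n"
  have n: "of_nat n \<noteq> (0::complex)" "of_nat n + 1 \<noteq> (0::complex)"
    using assms(1) by (auto simp: add.commute[of _ 1] simp flip: of_nat_Suc)
  have "z * poly (pderiv (sc_poly \<epsilon> \<rho> n)) z = 0"
    using d1 by simp
  then have d1: "of_nat (n + 1) * X * z - of_nat n * \<rho> * X + \<epsilon> * \<rho> * z = 0"
    unfolding poly_pderiv_sc_poly[OF n(1)[unfolded of_nat_eq_0_iff]] X_def .
  have "z^2 * poly ((pderiv ^^ 2) (sc_poly \<epsilon> \<rho> n)) z = 0"
    using d2 by simp
  then have "of_nat n * z^n * (of_nat (n + 1) * z - (of_nat n - 1) * \<rho>) = 0"
    unfolding poly_pderiv2_sc_poly[OF assms(1)] .
  then have d2: "(of_nat n - 1) * \<rho> = of_nat (n + 1) * z"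
    using assms(2) n by simp
  have "(of_nat (n + 1) * z) * (\<epsilon> * z - X)
      = (of_nat n - 1) * of_nat (n + 1) * X * z - (of_nat n * X - \<epsilon> * z) * ((of_nat n - 1) * \<rho>)"
    unfolding d2 by (simp add: algebra_simps)
  also have "\<dots> = (of_nat n - 1) * (of_nat (n + 1) * X * z - of_nat n * \<rho> * X + \<epsilon> * \<rho> * z)"
    by (simp add: algebra_simps)
  finally have "(of_nat (n + 1) * z) * (\<epsilon> * z - X) = 0"
    unfolding d1 by simp
  then show ?thesis
    using assms(2) n unfolding X_def by (auto simp: add.commute)
qed

lemma order_sc_poly_le_2:
  assumes "\<epsilon> \<noteq> 0" "n \<ge> 2" "z^2 \<noteq> 1"
  shows "order z (sc_poly \<epsilon> \<rho> n) \<le> 2"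
proof (cases "z = 0")
  case True
  then show ?thesis
    using assms by (simp add: poly_sc_poly_0 order_0I)
next
  case False
  have "poly (sc_poly \<epsilon> \<rho> n) z \<noteq> 0 \<or> poly (pderiv (sc_poly \<epsilon> \<rho> n)) z \<noteq> 0
      \<or> poly ((pderiv ^^ 2) (sc_poly \<epsilon> \<rho> n)) z \<noteq> 0"
  proof (rule ccontr)
    assume "\<not> ?thesis"
    then have "z^n = \<epsilon> * z" "\<rho> * (z^n - \<epsilon> * z) = z^n * z - \<epsilon>"
      using sc_poly_pderiv_roots_power_eq[OF assms(2) False] unfolding sc_poly_root_iff by auto
    then have "\<epsilon> * (z^2 - 1) = 0"
      by (simp add: algebra_simps power2_eq_square)
    then show False
      using assms(1,3) by simp
  qed
  then show ?thesis
    using order_le_if_poly_higher_pderiv_nonzero[of 0 _ z] order_le_if_poly_higher_pderiv_nonzero[of 1 _ z]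
      order_le_if_poly_higher_pderiv_nonzero[of 2 _ z]
    by fastforce
qed

lemma power_diff_inverse_eq_iff:
  fixes z :: complex
  assumes "z \<noteq> 0"
  shows "z^n - 1/z^n = c * (z - 1/z) \<longleftrightarrow> z * ((z^n)^2 - 1) = c * z^n * (z^2 - 1)"
proof -
  have "z * ((z^n)^2 - 1) - c * z^n * (z^2 - 1) = (z * z^n) * ((z^n - 1/z^n) - c * (z - 1/z))"
    using assms by (simp add: field_simps power2_eq_square)
  then show ?thesis
    using assms by auto
qed

text \<open>For \<open>z = e\<^sup>i\<^sup>\<mu>\<close> the last condition reads \<open>sin (n\<mu>) / sin \<mu> = \<epsilon> n\<close>; by
  \<open>sc_double_root_iff_order\<close> these \<open>z\<close> are the double roots of \<open>sc_poly \<epsilon> \<rho> n\<close> off \<open>\<plusminus>1\<close>.\<close>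
definition sc_double_root :: "complex \<Rightarrow> complex \<Rightarrow> nat \<Rightarrow> complex \<Rightarrow> bool" where
  "sc_double_root \<epsilon> \<rho> n z \<longleftrightarrow>
     z \<noteq> 0 \<and> z^2 \<noteq> 1 \<and> poly (sc_poly \<epsilon> \<rho> n) z = 0 \<and> z^n - 1/z^n = \<epsilon> * of_nat n * (z - 1/z)"

lemma sc_poly_root_imp_power_neq:
  assumes "\<epsilon> \<in> {1, -1}" "z^2 \<noteq> 1" "poly (sc_poly \<epsilon> \<rho> n) z = 0"
  shows "z^n - \<epsilon> * z \<noteq> 0"
proof
  assume "z^n - \<epsilon> * z = 0"
  then have "z^n = \<epsilon> * z" by simp
  then have "\<epsilon> * (z^2 - 1) = 0"
    using assms(1,3) unfolding sc_poly_root_iff by (auto simp: algebra_simps power2_eq_square)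
  then show False
    using assms(1,2) by auto
qed

lemma poly_pderiv_sc_poly_eq_0_iff:
  assumes "\<epsilon> \<in> {1, -1}" "n \<noteq> 0" "z^2 \<noteq> 1" and root: "poly (sc_poly \<epsilon> \<rho> n) z = 0"
  shows "poly (pderiv (sc_poly \<epsilon> \<rho> n)) z = 0 \<longleftrightarrow> z^n - 1/z^n = \<epsilon> * of_nat n * (z - 1/z)"
proof -
  define X where "X = z^n"
  define N where "N = (of_nat n :: complex)"
  have "z \<noteq> 0"
    using root assms(1,2) poly_sc_poly_0[of n \<epsilon> \<rho>] by auto
  have X: "X - \<epsilon> * z \<noteq> 0"
    unfolding X_def by (rule sc_poly_root_imp_power_neq[OF assms(1,3) root])
  have "(X - \<epsilon> * z) * (z * poly (pderiv (sc_poly \<epsilon> \<rho> n)) z)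
      = (N + 1) * X * z * (X - \<epsilon> * z) - (N * X - \<epsilon> * z) * (\<rho> * (X - \<epsilon> * z))"
    unfolding poly_pderiv_sc_poly[OF assms(2)] by (simp add: X_def N_def algebra_simps)
  also have "\<dots> = (N + 1) * X * z * (X - \<epsilon> * z) - (N * X - \<epsilon> * z) * (X * z - \<epsilon>)"
    using root unfolding sc_poly_root_iff X_def by simp
  also have "\<dots> = z * (X^2 - 1) - \<epsilon> * N * X * (z^2 - 1)"
    using assms(1) by (auto simp: algebra_simps power2_eq_square)
  finally show ?thesis
    unfolding power_diff_inverse_eq_iff[OF \<open>z \<noteq> 0\<close>]
    using X \<open>z \<noteq> 0\<close> by (auto simp: X_def N_def)
qed

lemma sc_double_root_iff_order:
  assumes "\<epsilon> \<in> {1, -1}" "n \<noteq> 0"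
  shows "sc_double_root \<epsilon> \<rho> n z \<longleftrightarrow> z^2 \<noteq> 1 \<and> order z (sc_poly \<epsilon> \<rho> n) \<ge> 2"
  using poly_pderiv_sc_poly_eq_0_iff[OF assms] poly_sc_poly_0[OF assms(2), of \<epsilon> \<rho>] assms(1)
  unfolding sc_double_root_def order_ge_2_iff[OF pderiv_sc_poly_nonzero[OF assms(2)]]
  by auto

lemma sc_double_root_inverse:
  assumes "\<epsilon> \<in> {1, -1}" "z \<noteq> 0"
  shows "sc_double_root \<epsilon> \<rho> n (1/z) \<longleftrightarrow> sc_double_root \<epsilon> \<rho> n z"
proof -
  have "z^(n+1) * poly (sc_poly \<epsilon> \<rho> n) (1/z) = - \<epsilon> * poly (sc_poly \<epsilon> \<rho> n) z"
    using assms by (auto simp: poly_sc_poly field_simps power_one_over)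
  then have "poly (sc_poly \<epsilon> \<rho> n) (1/z) = 0 \<longleftrightarrow> poly (sc_poly \<epsilon> \<rho> n) z = 0"
    using assms by auto
  moreover have "(1/z)^2 = 1 \<longleftrightarrow> z^2 = 1"
    using assms(2) by (auto simp: field_simps power_one_over)
  moreover have "(1/z)^n - 1/(1/z)^n = c * (1/z - 1/(1/z)) \<longleftrightarrow> z^n - 1/z^n = c * (z - 1/z)" for c
  proof -
    have "(1/z)^n - 1/(1/z)^n = - (z^n - 1/z^n)" "1/z - 1/(1/z) = - (z - 1/z)"
      by (simp_all add: power_one_over)
    then show ?thesis
      by (simp only: mult_minus_right neg_equal_iff_equal)
  qed
  moreover have "1/z \<noteq> 0"
    using assms(2) by simp
  ultimately show ?thesis
    using assms(2) unfolding sc_double_root_def by (simp only: not_True_eq_False not_False_eq_True)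
qed

lemma sc_double_root_symbol:
  assumes "\<epsilon> \<in> {1, -1}" "sc_double_root \<epsilon> \<rho> n z"
  shows "poly (KMS_symbol_num \<rho>) z = - of_nat n * poly (KMS_symbol_den \<rho>) z"
proof -
  define X where "X = z^n"
  define N where "N = (of_nat n :: complex)"
  have z: "z \<noteq> 0" "z^2 \<noteq> 1" and p: "poly (sc_poly \<epsilon> \<rho> n) z = 0"
    and "z^n - 1/z^n = \<epsilon> * of_nat n * (z - 1/z)"
    using assms(2) unfolding sc_double_root_def by auto
  then have root: "\<rho> * (X - \<epsilon> * z) = X * z - \<epsilon>"
    and h: "z * (X^2 - 1) = \<epsilon> * N * X * (z^2 - 1)"
    unfolding sc_poly_root_iff power_diff_inverse_eq_iff[OF z(1)] X_def N_def by simp_all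
  have X: "X - \<epsilon> * z \<noteq> 0"
    unfolding X_def by (rule sc_poly_root_imp_power_neq[OF assms(1) z(2) p])
  \<comment> \<open>after multiplying by \<open>(X - \<epsilon> z)\<^sup>2\<close>, \<open>\<rho>\<close> only occurs in \<open>\<rho> (X - \<epsilon> z)\<close>,
    which the root condition eliminates\<close>
  have "(X - \<epsilon> * z)^2 * ((1 - \<rho>^2) * z + N * ((1 - \<rho> * z) * (z - \<rho>)))
      = z * ((X - \<epsilon> * z)^2 - (\<rho> * (X - \<epsilon> * z))^2)
        + N * ((X - \<epsilon> * z) - z * (\<rho> * (X - \<epsilon> * z))) * (z * (X - \<epsilon> * z) - \<rho> * (X - \<epsilon> * z))"
    by (simp add: algebra_simps power2_eq_square)
  also have "\<dots> = z * ((X - \<epsilon> * z)^2 - (X * z - \<epsilon>)^2)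
        + N * ((X - \<epsilon> * z) - z * (X * z - \<epsilon>)) * (z * (X - \<epsilon> * z) - (X * z - \<epsilon>))"
    unfolding root ..
  also have "\<dots> = (1 - z^2) * (z * (X^2 - 1) - \<epsilon> * N * X * (z^2 - 1))"
    using assms(1) by (auto simp: algebra_simps power2_eq_square)
  also have "\<dots> = 0"
    using h by simp
  finally have "(1 - \<rho>^2) * z + N * ((1 - \<rho> * z) * (z - \<rho>)) = 0"
    using X by simp
  then show ?thesis
    by (simp add: N_def eq_neg_iff_add_eq_0)
qed

lemma sc_poly_no_common_root:
  assumes "\<rho> \<noteq> 0" "\<rho>^2 \<noteq> 1" "poly (sc_poly 1 \<rho> n) z = 0"
  shows "poly (sc_poly (-1) \<rho> n) z \<noteq> 0"
proof
  assume "poly (sc_poly (-1) \<rho> n) z = 0"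
  moreover have "poly (sc_poly 1 \<rho> n) z - poly (sc_poly (-1) \<rho> n) z = 2 * (\<rho> * z - 1)"
    by (simp add: poly_sc_poly algebra_simps)
  ultimately have "z = 1/\<rho>"
    using assms(1,3) by (simp add: field_simps)
  moreover have "poly (sc_poly 1 \<rho> n) (1/\<rho>) = (1/\<rho>)^(n+1) * (1 - \<rho>^2)"
    using assms(1) by (simp add: poly_sc_poly field_simps power2_eq_square)
  ultimately show False
    using assms by simp
qed

lemma order_sc_poly_sum:
  assumes "\<rho> \<noteq> 0" "\<rho>^2 \<noteq> 1"
  obtains \<epsilon> where "\<epsilon> \<in> {1, -1}"
    "order z (sc_poly 1 \<rho> n) + order z (sc_poly (-1) \<rho> n) = order z (sc_poly \<epsilon> \<rho> n)"
proof (cases "poly (sc_poly 1 \<rho> n) z = 0")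
  case True
  then show ?thesis
    using that[of 1] sc_poly_no_common_root[OF assms True] by (simp add: order_0I)
next
  case False
  then show ?thesis
    using that[of "-1"] by (simp add: order_0I)
qed

section \<open>Multiple eigenvalues of \<open>K\<^sub>n(\<rho>)\<close>\<close>

lemma multiple_eigenvalue_KMS:
  assumes \<rho>: "\<rho> \<noteq> 0" "\<rho>^2 \<noteq> 1" and n: "n \<ge> 2"
    and multiple: "order l (char_poly (KMS n \<rho>)) \<ge> 2"
  shows "l = - of_nat n \<and> order l (char_poly (KMS n \<rho>)) = 2"
proof -
  define m where "m = order l (char_poly (KMS n \<rho>))"
  have "poly (char_poly (KMS n \<rho>)) l = 0"
    using multiple order_root by fastforce
  moreover have "poly (char_poly (KMS n \<rho>)) 0 \<noteq> 0"
    using poly_char_poly_KMS_at_0[of "n - 1" \<rho>] n \<rho>(2) by simp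
  ultimately have "l \<noteq> 0" by auto
  then obtain z where level: "poly (KMS_symbol_num \<rho>) z = l * poly (KMS_symbol_den \<rho>) z"
    using KMS_symbol_level_nonempty[OF \<rho>(1)] by blast
  obtain \<epsilon> where \<epsilon>: "\<epsilon> \<in> {1, -1}"
    and "order z (sc_poly 1 \<rho> n) + order z (sc_poly (-1) \<rho> n) = order z (sc_poly \<epsilon> \<rho> n)"
    using order_sc_poly_sum[OF \<rho>] by blast
  then have orders: "m * (if z^2 = 1 then 2 else 1) + (if z^2 = 1 then 1 else 0) = order z (sc_poly \<epsilon> \<rho> n)"
    using order_char_poly_KMS_eq_order_sc_poly[OF \<rho> _ \<open>l \<noteq> 0\<close> level, of n] n unfolding m_def by simp
  have "z^2 \<noteq> 1"
  proof
    assume "z^2 = 1"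
    then have "2 * m + 1 \<le> 3"
      using orders order_sc_poly_le_3[OF \<rho>(1) _ n, of \<epsilon> z] \<epsilon> by auto
    then show False
      using multiple unfolding m_def by simp
  qed
  then have "m = order z (sc_poly \<epsilon> \<rho> n)" "order z (sc_poly \<epsilon> \<rho> n) \<le> 2"
    using orders order_sc_poly_le_2[OF _ n, of \<epsilon> z \<rho>] \<epsilon> by auto
  then have "m = 2" "sc_double_root \<epsilon> \<rho> n z"
    using multiple \<open>z^2 \<noteq> 1\<close> sc_double_root_iff_order[OF \<epsilon>, of n \<rho> z] n unfolding m_def by auto
  then have "l * poly (KMS_symbol_den \<rho>) z = - of_nat n * poly (KMS_symbol_den \<rho>) z"
    using sc_double_root_symbol[OF \<epsilon>] level by metis
  moreover have "poly (KMS_symbol_den \<rho>) z \<noteq> 0"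
    using level \<open>l \<noteq> 0\<close> \<rho> by (cases "z = 0") auto
  ultimately have "l = - of_nat n"
    by (metis mult_right_cancel)
  then show ?thesis
    using \<open>m = 2\<close> unfolding m_def by simp
qed

lemma double_eigenvalue_KMS_if_sc_double_root:
  assumes \<rho>: "\<rho> \<noteq> 0" "\<rho>^2 \<noteq> 1" and n: "n \<ge> 2"
    and \<epsilon>: "\<epsilon> \<in> {1, -1}" and z: "sc_double_root \<epsilon> \<rho> n z"
  shows "order (- of_nat n) (char_poly (KMS n \<rho>)) = 2"
proof -
  have "z^2 \<noteq> 1" "order z (sc_poly \<epsilon> \<rho> n) \<ge> 2"
    using z sc_double_root_iff_order[OF \<epsilon>, of n] n by auto
  moreover have "order (- of_nat n) (char_poly (KMS n \<rho>))
      = order z (sc_poly 1 \<rho> n) + order z (sc_poly (-1) \<rho> n)"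
    using order_char_poly_KMS_eq_order_sc_poly[OF \<rho>, of n "- of_nat n" z]
      sc_double_root_symbol[OF \<epsilon> z] n \<open>z^2 \<noteq> 1\<close> by simp
  ultimately have "order (- of_nat n) (char_poly (KMS n \<rho>)) \<ge> 2"
    using \<epsilon> by auto
  then show ?thesis
    using multiple_eigenvalue_KMS[OF \<rho> n] by blast
qed

section \<open>Eigenvalues of type 1 and type 2\<close>

lemma sin_of_nat_mult_exp: "sin (of_nat m * x) = (exp (\<i> * x)^m - 1 / exp (\<i> * x)^m) / (2 * \<i>)"
proof -
  have "exp (\<i> * (of_nat m * x)) = exp (\<i> * x)^m" "exp (- (\<i> * (of_nat m * x))) = 1 / exp (\<i> * x)^m"
    by (simp_all add: exp_minus algebra_simps inverse_eq_divide flip: exp_of_nat_mult)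
  then show ?thesis
    by (simp add: sin_exp_eq)
qed

lemma cos_of_nat_mult_exp: "cos (of_nat m * x) = (exp (\<i> * x)^m + 1 / exp (\<i> * x)^m) / 2"
proof -
  have "exp (\<i> * (of_nat m * x)) = exp (\<i> * x)^m" "exp (- (\<i> * (of_nat m * x))) = 1 / exp (\<i> * x)^m"
    by (simp_all add: exp_minus algebra_simps inverse_eq_divide flip: exp_of_nat_mult)
  then show ?thesis
    by (simp add: cos_exp_eq)
qed

lemma sc_poly_exp_eq:
  fixes \<mu> :: complex
  assumes "n \<noteq> 0"
  defines "w \<equiv> exp (\<i> * (\<mu> / 2))"
  shows "2 * \<i> * w^(n+1) * (sin (\<mu> * (of_nat n + 1) / 2) - \<rho> * sin (\<mu> * (of_nat n - 1) / 2))
           = poly (sc_poly 1 \<rho> n) (exp (\<i> * \<mu>))"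
    and "2 * w^(n+1) * (cos (\<mu> * (of_nat n + 1) / 2) - \<rho> * cos (\<mu> * (of_nat n - 1) / 2))
           = poly (sc_poly (-1) \<rho> n) (exp (\<i> * \<mu>))"
proof -
  obtain m where n: "n = Suc m"
    using assms(1) not0_implies_Suc by blast
  define z where "z = w^2"
  define V where "V = w^m"
  have "w \<noteq> 0" "V \<noteq> 0" "z \<noteq> 0"
    by (simp_all add: w_def V_def z_def)
  have exp_z: "exp (\<i> * \<mu>) = z"
    by (simp add: z_def w_def flip: exp_of_nat_mult)
  have angles: "\<mu> * (of_nat n + 1) / 2 = of_nat (m + 2) * (\<mu> / 2)" "\<mu> * (of_nat n - 1) / 2 = of_nat m * (\<mu> / 2)"
    unfolding n by (simp_all add: algebra_simps)
  have "w^(m+2) = V * z"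
    by (simp add: V_def z_def power_add power2_eq_square)
  moreover have "z^n = V^2 * z"
  proof -
    have "z^n = (w^2)^m * w^2"
      unfolding n z_def by (simp add: mult.commute)
    also have "(w^2)^m = V^2"
      unfolding V_def by (simp add: mult.commute flip: power_mult)
    finally show ?thesis
      by (simp add: z_def)
  qed
  ultimately have powers: "w^(n+1) = V * z" "w^(m+2) = V * z" "z^n = V^2 * z" "z^(n+1) = V^2 * z^2"
    by (simp_all add: n power2_eq_square)
  show "2 * \<i> * w^(n+1) * (sin (\<mu> * (of_nat n + 1) / 2) - \<rho> * sin (\<mu> * (of_nat n - 1) / 2))
      = poly (sc_poly 1 \<rho> n) (exp (\<i> * \<mu>))"
    unfolding angles sin_of_nat_mult_exp w_def[symmetric] powers V_def[symmetric] exp_z poly_sc_poly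
    using \<open>V \<noteq> 0\<close> \<open>z \<noteq> 0\<close> by (simp add: field_simps power2_eq_square)
  show "2 * w^(n+1) * (cos (\<mu> * (of_nat n + 1) / 2) - \<rho> * cos (\<mu> * (of_nat n - 1) / 2))
      = poly (sc_poly (-1) \<rho> n) (exp (\<i> * \<mu>))"
    unfolding angles cos_of_nat_mult_exp w_def[symmetric] powers V_def[symmetric] exp_z poly_sc_poly
    using \<open>V \<noteq> 0\<close> \<open>z \<noteq> 0\<close> by (simp add: field_simps power2_eq_square)
qed

lemma sc_double_root_exp_iff:
  assumes "n \<noteq> 0"
  shows "sc_double_root 1 \<rho> n (exp (\<i> * \<mu>)) \<longleftrightarrow> sin \<mu> \<noteq> 0
           \<and> sin (\<mu> * (of_nat n + 1) / 2) - \<rho> * sin (\<mu> * (of_nat n - 1) / 2) = 0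
           \<and> - of_nat n = - sin (of_nat n * \<mu>) / sin \<mu>"
    and "sc_double_root (-1) \<rho> n (exp (\<i> * \<mu>)) \<longleftrightarrow> sin \<mu> \<noteq> 0
           \<and> cos (\<mu> * (of_nat n + 1) / 2) - \<rho> * cos (\<mu> * (of_nat n - 1) / 2) = 0
           \<and> - of_nat n = sin (of_nat n * \<mu>) / sin \<mu>"
proof -
  define z where "z = exp (\<i> * \<mu>)"
  have "z \<noteq> 0" "exp (\<i> * (\<mu> / 2)) \<noteq> 0"
    by (simp_all add: z_def)
  define A where "A = z^n - 1/z^n"
  define B where "B = z - 1/z"
  have sin: "sin \<mu> = B / (2 * \<i>)" "sin (of_nat n * \<mu>) = A / (2 * \<i>)"
    using sin_of_nat_mult_exp[of 1 \<mu>] sin_of_nat_mult_exp[of n \<mu>] by (simp_all add: A_def B_def z_def)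
  have sin_nonzero: "sin \<mu> \<noteq> 0 \<longleftrightarrow> z^2 \<noteq> 1"
    using \<open>z \<noteq> 0\<close> unfolding sin B_def by (auto simp: field_simps power2_eq_square)
  have ratio: "- of_nat n = - sin (of_nat n * \<mu>) / sin \<mu> \<longleftrightarrow> A = of_nat n * B"
    "- of_nat n = sin (of_nat n * \<mu>) / sin \<mu> \<longleftrightarrow> A = - of_nat n * B"
    if "sin \<mu> \<noteq> 0"
    using that unfolding sin by (auto simp: field_simps)
  show "sc_double_root 1 \<rho> n (exp (\<i> * \<mu>)) \<longleftrightarrow> sin \<mu> \<noteq> 0
           \<and> sin (\<mu> * (of_nat n + 1) / 2) - \<rho> * sin (\<mu> * (of_nat n - 1) / 2) = 0
           \<and> - of_nat n = - sin (of_nat n * \<mu>) / sin \<mu>"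
    using sc_poly_exp_eq(1)[OF assms, of \<mu> \<rho>] ratio(1) sin_nonzero \<open>z \<noteq> 0\<close>
      \<open>exp (\<i> * (\<mu> / 2)) \<noteq> 0\<close>
    unfolding sc_double_root_def z_def[symmetric] A_def B_def by auto
  show "sc_double_root (-1) \<rho> n (exp (\<i> * \<mu>)) \<longleftrightarrow> sin \<mu> \<noteq> 0
           \<and> cos (\<mu> * (of_nat n + 1) / 2) - \<rho> * cos (\<mu> * (of_nat n - 1) / 2) = 0
           \<and> - of_nat n = sin (of_nat n * \<mu>) / sin \<mu>"
    using sc_poly_exp_eq(2)[OF assms, of \<mu> \<rho>] ratio(2) sin_nonzero \<open>z \<noteq> 0\<close>
      \<open>exp (\<i> * (\<mu> / 2)) \<noteq> 0\<close>
    unfolding sc_double_root_def z_def[symmetric] A_def B_def by auto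
qed

lemma ex_exp_i_iff:
  assumes "\<And>z. P z \<Longrightarrow> z \<noteq> 0"
  shows "(\<exists>\<mu>. P (exp (\<i> * \<mu>))) \<longleftrightarrow> (\<exists>z. P z)"
proof
  assume "\<exists>z. P z"
  then obtain z where "P z" ..
  then have "exp (\<i> * (- \<i> * Ln z)) = z"
    using assms by simp
  with \<open>P z\<close> show "\<exists>\<mu>. P (exp (\<i> * \<mu>))"
    by metis
qed blast

lemma type1_eig_minus_n_iff:
  assumes "n \<noteq> 0"
  shows "type1_eig n \<rho> (- of_nat n) \<longleftrightarrow> (\<exists>z. sc_double_root 1 \<rho> n z)"
  unfolding type1_eig_def sc_double_root_exp_iff(1)[OF assms, symmetric]
  by (rule ex_exp_i_iff) (simp add: sc_double_root_def)

lemma type2_eig_minus_n_iff: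
  assumes "n \<noteq> 0"
  shows "type2_eig n \<rho> (- of_nat n) \<longleftrightarrow> (\<exists>z. sc_double_root (-1) \<rho> n z)"
  unfolding type2_eig_def sc_double_root_exp_iff(2)[OF assms, symmetric]
  by (rule ex_exp_i_iff) (simp add: sc_double_root_def)

section \<open>Chebyshev polynomials and the Joukowski map\<close>

lemma poly_chebU_Joukowski:
  assumes "z \<noteq> 0"
  shows "poly (chebU k) ((z + 1/z) / 2) * (z - 1/z) = z^(k+1) - 1/z^(k+1)"
proof (induction k rule: chebU.induct)
  case 1
  then show ?case by simp
next
  case 2
  then show ?case
    using assms by (simp add: field_simps power2_eq_square)
next
  case (3 k)
  let ?U = "\<lambda>k. poly (chebU k) ((z + 1/z) / 2)"
  have "?U (Suc (Suc k)) = (z + 1/z) * ?U (Suc k) - ?U k"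
    by simp
  then have "?U (Suc (Suc k)) * (z - 1/z) = (z + 1/z) * (?U (Suc k) * (z - 1/z)) - ?U k * (z - 1/z)"
    by (simp only: left_diff_distrib mult.assoc)
  also have "\<dots> = (z + 1/z) * (z^(Suc k + 1) - 1/z^(Suc k + 1)) - (z^(k+1) - 1/z^(k+1))"
    using 3 by simp
  also have "\<dots> = z^(Suc (Suc k) + 1) - 1/z^(Suc (Suc k) + 1)"
    using assms by (simp add: field_simps)
  finally show ?case .
qed

lemma poly_chebU_Joukowski_eq_iff:
  assumes "n \<noteq> 0" "z \<noteq> 0" "z^2 \<noteq> 1"
  shows "poly (chebU (n - 1)) ((z + 1/z) / 2) = c \<longleftrightarrow> z^n - 1/z^n = c * (z - 1/z)"
proof -
  have "z - 1/z \<noteq> 0"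
    using assms(2,3) by (simp add: field_simps power2_eq_square)
  then show ?thesis
    using poly_chebU_Joukowski[OF assms(2), of "n - 1"] assms(1) by auto
qed

lemma pderiv_chebU_Suc_Suc:
  "pderiv (chebU (Suc (Suc k)))
     = [:0, 2:] * pderiv (chebU (Suc k)) + Polynomial.smult 2 (chebU (Suc k)) - pderiv (chebU k)"
  by (simp add: pderiv_diff pderiv_mult pderiv_pCons pderiv_smult algebra_simps)

lemma poly_chebU_sign:
  fixes \<sigma> :: complex
  assumes "\<sigma> \<in> {1, -1}"
  shows "poly (chebU k) \<sigma> = \<sigma>^k * (of_nat k + 1)
     \<and> 3 * poly (pderiv (chebU k)) \<sigma> = \<sigma>^(Suc k) * (of_nat k * (of_nat k + 1) * (of_nat k + 2))"
proof (induction k rule: chebU.induct)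
  case 1
  then show ?case by simp
next
  case 2
  then show ?case
    using assms by (auto simp: pderiv_pCons)
next
  case (3 k)
  have "poly (chebU (Suc (Suc k))) \<sigma> = 2 * \<sigma> * poly (chebU (Suc k)) \<sigma> - poly (chebU k) \<sigma>"
    by simp
  moreover have "3 * poly (pderiv (chebU (Suc (Suc k)))) \<sigma>
      = 2 * \<sigma> * (3 * poly (pderiv (chebU (Suc k))) \<sigma>) + 6 * poly (chebU (Suc k)) \<sigma>
        - 3 * poly (pderiv (chebU k)) \<sigma>"
    unfolding pderiv_chebU_Suc_Suc by (simp add: algebra_simps)
  ultimately show ?case
    using 3 assms by (auto simp del: chebU.simps simp add: algebra_simps)
qed

lemma poly_pderiv_chebU_sign_nonzero:
  fixes \<sigma> :: complex
  assumes "\<sigma> \<in> {1, -1}" "k \<noteq> 0"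
  shows "poly (pderiv (chebU k)) \<sigma> \<noteq> 0"
proof -
  have "\<sigma> \<noteq> 0"
    using assms(1) by auto
  moreover have "(of_nat k + 1 :: complex) \<noteq> 0" "(of_nat k + 2 :: complex) \<noteq> 0"
    by (metis of_nat_Suc of_nat_neq_0 add.commute, metis of_nat_add of_nat_numeral of_nat_eq_0_iff add_is_0 zero_neq_numeral)
  ultimately show ?thesis
    using poly_chebU_sign[OF assms(1), of k] assms(2) by auto
qed

lemma chebU_plus_const_nonzero:
  assumes "k \<noteq> 0"
  shows "chebU k + [:c:] \<noteq> 0"
proof
  assume "chebU k + [:c:] = 0"
  moreover have "pderiv (chebU k + [:c:]) = pderiv (chebU k)"
    by (simp add: pderiv_add pderiv_pCons)
  ultimately have "pderiv (chebU k) = 0"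
    by simp
  then show False
    using poly_pderiv_chebU_sign_nonzero[of 1 k] assms by simp
qed

lemma order_chebU_plus_const_le_1:
  fixes \<sigma> :: complex
  assumes "\<sigma> \<in> {1, -1}" "k \<noteq> 0"
  shows "order \<sigma> (chebU k + [:c:]) \<le> 1"
  using order_le_if_poly_higher_pderiv_nonzero[of 1 "chebU k + [:c:]" \<sigma>]
    poly_pderiv_chebU_sign_nonzero[OF assms]
  by (simp add: pderiv_add pderiv_pCons)

lemma poly_chebU_plus_const_div_eq_0_iff:
  assumes "k \<noteq> 0" "d dvd chebU k + [:c:]" "\<And>a. poly d a = 0 \<Longrightarrow> a = 1 \<or> a = -1"
  shows "poly ((chebU k + [:c:]) div d) t = 0 \<longleftrightarrow> poly (chebU k) t = - c \<and> poly d t \<noteq> 0"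
proof -
  have "poly ((chebU k + [:c:]) div d) t = 0 \<longleftrightarrow> poly (chebU k + [:c:]) t = 0 \<and> poly d t \<noteq> 0"
    using chebU_plus_const_nonzero[OF assms(1)] assms(2)
  proof (rule poly_div_eq_0_iff)
    show "order a (chebU k + [:c:]) \<le> 1" if "poly d a = 0" for a
      using order_chebU_plus_const_le_1[OF _ assms(1)] assms(3)[OF that] by blast
  qed
  then show ?thesis
    by (simp add: add_eq_0_iff2)
qed

lemma poly_chebU_pm1:
  assumes "n \<noteq> 0"
  shows "poly (chebU (n - 1)) 1 = of_nat n" "poly (chebU (n - 1)) (-1) = (-1)^(n - 1) * of_nat n"
  using poly_chebU_sign[of 1 "n - 1"] poly_chebU_sign[of "-1" "n - 1"] assms by simp_all

lemma poly_q1_eq_0_iff: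
  assumes "n \<ge> 2"
  shows "poly (q1 n) t = 0 \<longleftrightarrow> poly (chebU (n - 1)) t = of_nat n \<and> t \<noteq> 1 \<and> t \<noteq> -1"
proof -
  note U = poly_chebU_pm1[of n]
  have q1: "q1 n = (chebU (n - 1) + [:- of_nat n:]) div (if even n then [:-1, 1:] else [:-1, 0, 1:])"
    by (simp add: q1_def diff_conv_add_uminus)
  show ?thesis
  proof (cases "even n")
    case True
    have "[:-1, 1:] dvd chebU (n - 1) + [:- of_nat n:]"
      using U(1) assms by (simp add: poly_eq_0_iff_dvd[symmetric])
    moreover have "poly (chebU (n - 1)) (-1) \<noteq> of_nat n"
      using U(2) True assms by simp
    ultimately show ?thesis
      unfolding q1 using True assms by (subst poly_chebU_plus_const_div_eq_0_iff) auto
  next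
    case False
    have "[:-1, 0, 1:] dvd chebU (n - 1) + [:- of_nat n:]"
      using U False assms by (intro dvd_square_minus_one) simp_all
    then show ?thesis
      unfolding q1 using False assms
      by (subst poly_chebU_plus_const_div_eq_0_iff) (auto simp: square_eq_1_iff)
  qed
qed

lemma poly_q2_eq_0_iff:
  assumes "n \<ge> 2"
  shows "poly (q2 n) t = 0 \<longleftrightarrow> poly (chebU (n - 1)) t = - of_nat n \<and> t \<noteq> 1 \<and> t \<noteq> -1"
proof -
  note U = poly_chebU_pm1[of n]
  have q2: "q2 n = (chebU (n - 1) + [:of_nat n:]) div (if even n then [:1, 1:] else 1)"
    by (simp add: q2_def)
  have "poly (chebU (n - 1)) 1 \<noteq> - of_nat n"
    using U(1) assms by simp
  show ?thesis
  proof (cases "even n")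
    case True
    have "[:1, 1:] dvd chebU (n - 1) + [:of_nat n:]"
      using U(2) True assms poly_eq_0_iff_dvd[of "chebU (n - 1) + [:of_nat n:]" "-1"] by simp
    then show ?thesis
      unfolding q2 using True assms \<open>poly (chebU (n - 1)) 1 \<noteq> - of_nat n\<close>
      by (subst poly_chebU_plus_const_div_eq_0_iff) (auto simp: add_eq_0_iff)
  next
    case False
    have "poly (chebU (n - 1)) (-1) \<noteq> - of_nat n"
      using U(2) False assms by simp
    then show ?thesis
      unfolding q2 using False assms \<open>poly (chebU (n - 1)) 1 \<noteq> - of_nat n\<close>
      by (subst poly_chebU_plus_const_div_eq_0_iff) auto
  qed
qed

lemma Joukowski_eq_pm1_iff:
  fixes z :: complex
  assumes "z \<noteq> 0"
  shows "(z + 1/z) / 2 = 1 \<or> (z + 1/z) / 2 = -1 \<longleftrightarrow> z^2 = 1"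
proof -
  have "(z + 1/z) / 2 = 1 \<longleftrightarrow> (z - 1)^2 = 0"
    using assms by (simp add: field_simps power2_eq_square algebra_simps)
  moreover have "(z + 1/z) / 2 = -1 \<longleftrightarrow> (z + 1)^2 = 0"
    using assms by (simp add: field_simps power2_eq_square algebra_simps)
      (auto simp: eq_neg_iff_add_eq_0 algebra_simps)
  ultimately show ?thesis
    by (auto simp: power2_eq_1_iff add_eq_0_iff2)
qed

lemma Joukowski_eq_iff:
  fixes w z :: complex
  assumes "w \<noteq> 0" "z \<noteq> 0"
  shows "(w + 1/w) / 2 = (z + 1/z) / 2 \<longleftrightarrow> w = z \<or> w = 1/z"
proof -
  have "(w - z) * (w * z - 1) = w * z * ((w + 1/w) - (z + 1/z))"
    using assms by (simp add: field_simps)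
  then have "w + 1/w = z + 1/z \<longleftrightarrow> w - z = 0 \<or> w * z - 1 = 0"
    using assms by auto
  also have "\<dots> \<longleftrightarrow> w = z \<or> w = 1/z"
    using assms by (auto simp: field_simps)
  finally show ?thesis
    by (metis divide_cancel_right zero_neq_numeral)
qed

lemma Joukowski_exp_Arccos: "(exp (\<i> * Arccos t) + 1 / exp (\<i> * Arccos t)) / 2 = t"
  using cos_exp_eq[of "Arccos t"] by (simp add: exp_minus inverse_eq_divide)

text \<open>\<open>t \<mapsto> exp (\<i> Arccos t)\<close> is a section of the Joukowski map \<open>z \<mapsto> (z + 1/z) / 2\<close>, whose
  fibres are the pairs \<open>{z, 1/z}\<close>.\<close>
lemma ex_Joukowski_Arccos:
  assumes "\<And>z. P z \<Longrightarrow> z \<noteq> 0" and "\<And>z. z \<noteq> 0 \<Longrightarrow> P (1/z) \<longleftrightarrow> P z"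
  shows "(\<exists>z. P z) \<longleftrightarrow> (\<exists>t. P (exp (\<i> * Arccos t)))"
proof
  assume "\<exists>z. P z"
  then obtain z where "P z" ..
  define w where "w = exp (\<i> * Arccos ((z + 1/z) / 2))"
  have "w = z \<or> w = 1/z"
    using Joukowski_eq_iff[of w z] assms(1)[OF \<open>P z\<close>]
    by (simp add: w_def Joukowski_exp_Arccos)
  then have "P w"
    using \<open>P z\<close> assms by auto
  then show "\<exists>t. P (exp (\<i> * Arccos t))"
    unfolding w_def by blast
qed blast

lemma chebT_half_ratio_Arccos:
  fixes t :: complex
  assumes "n \<noteq> 0"
  defines "z \<equiv> exp (\<i> * Arccos t)"
  shows "chebT_half (n + 1) t / chebT_half (n - 1) t = (z^n * z + 1) / (z^n + z)"
proof -
  obtain m where n: "n = Suc m"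
    using assms(1) not0_implies_Suc by blast
  define w where "w = exp (\<i> * (Arccos t / 2))"
  define V where "V = w^m"
  have "w \<noteq> 0" "V \<noteq> 0"
    by (simp_all add: w_def V_def)
  have z: "z = w^2"
    by (simp add: z_def w_def flip: exp_of_nat_mult)
  have T: "chebT_half k t = (w^k + 1/w^k) / 2" for k
  proof -
    have "chebT_half k t = cos (of_nat k * (Arccos t / 2))"
      by (simp add: chebT_half_def algebra_simps)
    then show ?thesis
      unfolding cos_of_nat_mult_exp w_def .
  qed
  have powers: "w^(n+1) = V * z" "w^(n-1) = V" "z^n = V^2 * z"
    unfolding n V_def z by (simp_all add: power_add power2_eq_square power_mult_distrib
        flip: power_mult mult_2_right)
  have "chebT_half (n + 1) t = (z^n * z + 1) / (2 * (V * z))" "chebT_half (n - 1) t = (z^n + z) / (2 * (V * z))"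
    unfolding T powers using \<open>V \<noteq> 0\<close> \<open>w \<noteq> 0\<close> by (simp_all add: z field_simps power2_eq_square)
  then show ?thesis
    using \<open>V \<noteq> 0\<close> \<open>w \<noteq> 0\<close> by (simp add: z)
qed

lemma sc_double_root_Joukowski_iff:
  assumes "n \<noteq> 0" "z \<noteq> 0"
  shows "sc_double_root \<epsilon> \<rho> n z \<longleftrightarrow>
    (poly (chebU (n - 1)) ((z + 1/z) / 2) = \<epsilon> * of_nat n \<and> (z + 1/z) / 2 \<noteq> 1 \<and> (z + 1/z) / 2 \<noteq> -1)
    \<and> poly (sc_poly \<epsilon> \<rho> n) z = 0"
  using Joukowski_eq_pm1_iff[OF assms(2)] poly_chebU_Joukowski_eq_iff[OF assms] assms(2)
  unfolding sc_double_root_def by blast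

lemma power_neq_sign_mult:
  fixes z :: complex
  assumes "n \<ge> 2" "z \<noteq> 0" "z^2 \<noteq> 1" "\<sigma> \<in> {1, -1}" "c \<in> {1, -1}"
    and ratio: "z^n - 1/z^n = c * of_nat n * (z - 1/z)"
  shows "z^n \<noteq> \<sigma> * z"
proof
  assume "z^n = \<sigma> * z"
  then have "z^n - 1/z^n = \<sigma> * (z - 1/z)"
    using assms(4) by (auto simp: field_simps)
  then have "(\<sigma> - c * of_nat n) * (z - 1/z) = 0"
    using ratio by (simp add: algebra_simps)
  moreover have "z - 1/z \<noteq> 0"
    using assms(2,3) by (simp add: field_simps power2_eq_square)
  ultimately have "c * of_nat n = \<sigma>"
    by simp
  then have "norm (c * of_nat n) = norm \<sigma>"
    by simp
  then have "n = 1"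
    using assms(4,5) by (auto simp: norm_mult)
  then show False
    using assms(1) by simp
qed

lemma sc_poly_1_root_iff:
  assumes "n \<ge> 2" "z \<noteq> 0" "z^2 \<noteq> 1" and h: "z^n - 1/z^n = of_nat n * (z - 1/z)"
  shows "poly (sc_poly 1 \<rho> n) z = 0 \<longleftrightarrow> \<rho> = xi n * ((z^n * z + 1) / (z^n + z))"
proof -
  define X where "X = z^n"
  define N where "N = (of_nat n :: complex)"
  have "X - z \<noteq> 0" "X + z \<noteq> 0"
    using power_neq_sign_mult[OF assms(1-3), of 1 1] power_neq_sign_mult[OF assms(1-3), of "-1" 1] h
    unfolding X_def by (auto simp: add_eq_0_iff2)
  have "N - 1 \<noteq> 0"
    using assms(1) unfolding N_def by auto
  have h: "z * (X^2 - 1) = N * X * (z^2 - 1)"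
    using h unfolding power_diff_inverse_eq_iff[OF assms(2)] X_def N_def .
  have "(N + 1) * (X * z + 1) * (X - z) - (N - 1) * (X * z - 1) * (X + z)
      = 2 * (z * (X^2 - 1) - N * X * (z^2 - 1))"
    by (simp add: algebra_simps power2_eq_square)
  then have key: "(N + 1) * (X * z + 1) * (X - z) = (N - 1) * (X * z - 1) * (X + z)"
    using h by simp
  have "poly (sc_poly 1 \<rho> n) z = 0 \<longleftrightarrow> \<rho> = (X * z - 1) / (X - z)"
    using \<open>X - z \<noteq> 0\<close> unfolding sc_poly_root_iff X_def by (auto simp: field_simps)
  also have "(X * z - 1) / (X - z) = ((N + 1) * (X * z + 1)) / ((N - 1) * (X + z))"
    using key \<open>X - z \<noteq> 0\<close> \<open>X + z \<noteq> 0\<close> \<open>N - 1 \<noteq> 0\<close> by (simp add: frac_eq_eq)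
  also have "\<dots> = xi n * ((X * z + 1) / (X + z))"
    by (simp add: xi_def N_def)
  finally show ?thesis
    unfolding X_def .
qed

lemma sc_poly_minus_1_root_iff:
  assumes "n \<ge> 2" "z \<noteq> 0" "z^2 \<noteq> 1" and h: "z^n - 1/z^n = - of_nat n * (z - 1/z)"
  shows "poly (sc_poly (-1) \<rho> n) z = 0 \<longleftrightarrow> \<rho> = (z^n * z + 1) / (z^n + z)"
proof -
  have "z^n + z \<noteq> 0"
    using power_neq_sign_mult[OF assms(1-3), of "-1" "-1"] h by (auto simp: add_eq_0_iff2)
  then show ?thesis
    unfolding sc_poly_root_iff by (auto simp: field_simps)
qed

lemma ex_q1_root_iff_sc_double_root:
  assumes "n \<ge> 2"
  shows "(\<exists>t0. poly (q1 n) t0 = 0 \<and> \<rho> = xi n * chebT_half (n + 1) t0 / chebT_half (n - 1) t0)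
     \<longleftrightarrow> (\<exists>z. sc_double_root 1 \<rho> n z)"
proof -
  have "sc_double_root 1 \<rho> n (exp (\<i> * Arccos t))
      \<longleftrightarrow> poly (q1 n) t = 0 \<and> \<rho> = xi n * chebT_half (n + 1) t / chebT_half (n - 1) t" for t
  proof -
    define z where "z = exp (\<i> * Arccos t)"
    have z: "z \<noteq> 0" "(z + 1/z) / 2 = t"
      using Joukowski_exp_Arccos[of t] by (simp_all add: z_def)
    have "sc_double_root 1 \<rho> n z \<longleftrightarrow> poly (q1 n) t = 0 \<and> poly (sc_poly 1 \<rho> n) z = 0"
      using sc_double_root_Joukowski_iff[of n z 1 \<rho>] poly_q1_eq_0_iff[OF assms] assms z by auto
    moreover have "poly (sc_poly 1 \<rho> n) z = 0 \<longleftrightarrow> \<rho> = xi n * chebT_half (n + 1) t / chebT_half (n - 1) t"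
      if "poly (q1 n) t = 0"
    proof -
      have "z^2 \<noteq> 1" "poly (chebU (n - 1)) ((z + 1/z) / 2) = of_nat n"
        using that poly_q1_eq_0_iff[OF assms] Joukowski_eq_pm1_iff[OF z(1)] z(2) by auto
      then have h: "z^2 \<noteq> 1" "z^n - 1/z^n = of_nat n * (z - 1/z)"
        using poly_chebU_Joukowski_eq_iff[of n z "of_nat n"] assms z(1) by auto
      have ratio: "chebT_half (n + 1) t / chebT_half (n - 1) t = (z^n * z + 1) / (z^n + z)"
        unfolding z_def by (rule chebT_half_ratio_Arccos) (use assms in simp)
      show ?thesis
        unfolding sc_poly_1_root_iff[OF assms z(1) h] times_divide_eq_right[symmetric] ratio ..
    qed
    ultimately show ?thesis
      unfolding z_def by blast
  qed
  moreover have "(\<exists>z. sc_double_root 1 \<rho> n z) \<longleftrightarrow> (\<exists>t. sc_double_root 1 \<rho> n (exp (\<i> * Arccos t)))"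
    by (intro ex_Joukowski_Arccos sc_double_root_inverse) (auto simp: sc_double_root_def)
  ultimately show ?thesis
    by simp
qed

lemma ex_q2_root_iff_sc_double_root:
  assumes "n \<ge> 2"
  shows "(\<exists>t0. poly (q2 n) t0 = 0 \<and> \<rho> = chebT_half (n + 1) t0 / chebT_half (n - 1) t0)
     \<longleftrightarrow> (\<exists>z. sc_double_root (-1) \<rho> n z)"
proof -
  have "sc_double_root (-1) \<rho> n (exp (\<i> * Arccos t))
      \<longleftrightarrow> poly (q2 n) t = 0 \<and> \<rho> = chebT_half (n + 1) t / chebT_half (n - 1) t" for t
  proof -
    define z where "z = exp (\<i> * Arccos t)"
    have z: "z \<noteq> 0" "(z + 1/z) / 2 = t"
      using Joukowski_exp_Arccos[of t] by (simp_all add: z_def)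
    have "sc_double_root (-1) \<rho> n z \<longleftrightarrow> poly (q2 n) t = 0 \<and> poly (sc_poly (-1) \<rho> n) z = 0"
      using sc_double_root_Joukowski_iff[of n z "-1" \<rho>] poly_q2_eq_0_iff[OF assms] assms z by auto
    moreover have "poly (sc_poly (-1) \<rho> n) z = 0 \<longleftrightarrow> \<rho> = chebT_half (n + 1) t / chebT_half (n - 1) t"
      if "poly (q2 n) t = 0"
    proof -
      have "z^2 \<noteq> 1" "poly (chebU (n - 1)) ((z + 1/z) / 2) = - of_nat n"
        using that poly_q2_eq_0_iff[OF assms] Joukowski_eq_pm1_iff[OF z(1)] z(2) by auto
      then have h: "z^2 \<noteq> 1" "z^n - 1/z^n = - of_nat n * (z - 1/z)"
        using poly_chebU_Joukowski_eq_iff[of n z "- of_nat n"] assms z(1) by auto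
      have ratio: "chebT_half (n + 1) t / chebT_half (n - 1) t = (z^n * z + 1) / (z^n + z)"
        unfolding z_def by (rule chebT_half_ratio_Arccos) (use assms in simp)
      show ?thesis
        unfolding sc_poly_minus_1_root_iff[OF assms z(1) h] times_divide_eq_right[symmetric] ratio ..
    qed
    ultimately show ?thesis
      unfolding z_def by blast
  qed
  moreover have "(\<exists>z. sc_double_root (-1) \<rho> n z) \<longleftrightarrow> (\<exists>t. sc_double_root (-1) \<rho> n (exp (\<i> * Arccos t)))"
    by (intro ex_Joukowski_Arccos sc_double_root_inverse) (auto simp: sc_double_root_def)
  ultimately show ?thesis
    by simp
qed

theorem theorem4p5:
  fixes n :: nat and \<rho> :: complex
  assumes "n \<ge> 2" and "\<rho> \<notin> {-1, 0, 1}"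
  shows "(\<forall>lam. alg_mult n \<rho> lam \<ge> 2 \<longrightarrow> lam = - of_nat n \<and> alg_mult n \<rho> lam = 2)
    \<and> ((alg_mult n \<rho> (- of_nat n) = 2 \<and> type1_eig n \<rho> (- of_nat n)) \<longleftrightarrow>
         (\<exists>t0. poly (q1 n) t0 = 0 \<and>
               \<rho> = xi n * chebT_half (n + 1) t0 / chebT_half (n - 1) t0))
    \<and> ((alg_mult n \<rho> (- of_nat n) = 2 \<and> type2_eig n \<rho> (- of_nat n)) \<longleftrightarrow>
         (\<exists>t0. poly (q2 n) t0 = 0 \<and>
               \<rho> = chebT_half (n + 1) t0 / chebT_half (n - 1) t0))"
proof -
  have \<rho>: "\<rho> \<noteq> 0" "\<rho>^2 \<noteq> 1"
    using assms(2) by (auto simp: power2_eq_1_iff)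
  have "n \<noteq> 0"
    using assms(1) by simp
  have "\<forall>lam. alg_mult n \<rho> lam \<ge> 2 \<longrightarrow> lam = - of_nat n \<and> alg_mult n \<rho> lam = 2"
    unfolding alg_mult_def using multiple_eigenvalue_KMS[OF \<rho> assms(1)] by blast
  moreover have "alg_mult n \<rho> (- of_nat n) = 2" if "sc_double_root \<epsilon> \<rho> n z" "\<epsilon> \<in> {1, -1}" for \<epsilon> z
    unfolding alg_mult_def by (rule double_eigenvalue_KMS_if_sc_double_root[OF \<rho> assms(1) that(2,1)])
  ultimately show ?thesis
    unfolding type1_eig_minus_n_iff[OF \<open>n \<noteq> 0\<close>] type2_eig_minus_n_iff[OF \<open>n \<noteq> 0\<close>]
      ex_q1_root_iff_sc_double_root[OF assms(1)] ex_q2_root_iff_sc_double_root[OF assms(1)]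
    by blast
qed

end
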